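(* Every $\mathbb{C}$-algebra $R(A,P_0)$ obtained from data $(A,P_0)$ as described in the context is isomorphic as a $\mathbb{C}$-algebra (forgetting the $K_0$-grading) to a product $$\bigotimes_{i=1}^t R(A^{(i)},P_0^{(i)}) \otimes \mathbb{C}[S_1,\ldots,S_{m'}],$$ where the algebras $R(A^{(i)},P_0^{(i)})$ (each obtained by the same construction from data $(A^{(i)},P_0^{(i)})$) are indecomposable with $m^{(i)} = 0$ for all $i=1,\ldots,t$, and $m'\geq m$ holds.
   Context: Fix integers $r \geq c > 0$, $n_0,\ldots,n_r>0$ and $m\geq 0$, and set $n:=n_0+\ldots+n_r$. Let $A=(a_0,\ldots,a_r)$ be a $(c+1)\times(r+1)$ complex matrix of full rank with pairwise linearly independent columns $a_i$, and let $P_0$ be the $r\times(n+m)$ matrix built from tuples $l_i=(l_{i1},\ldots,l_{in_i})$ of positive integers, $$P_0=\left[\begin{array}{ccccccc} -l_0&l_1&&&0&\ldots&0\\ \vdots&&\ddots&&\vdots&&\vdots\\ -l_0&&&l_r&0&\ldots&0\end{array}\right].$$ In the polynomial ring $\mathbb{C}[T_{ij},S_k]$ ($i=0,\ldots,r$, $j=1,\ldots,n_i$, $k=1,\ldots,m$) set $T_i^{l_i}:=T_{i1}^{l_{i1}}\cdots T_{in_i}^{l_{in_i}}$ and, for $v\in\mathbb{C}^{r+1}$, $g_v:=v_0T_0^{l_0}+\ldots+v_rT_r^{l_r}$. Define $R(A,P_0):=\mathbb{C}[T_{ij},S_k]/\langle g_v;\ v\in\ker(A)\rangle$, graded by $K_0:=\mathbb{Z}^{n+m}/\mathrm{im}(P_0^*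 )$ via $\deg(T_{ij})$, $\deg(S_k)$ the images of the canonical basis vectors. The matrix $A$ is called indecomposable if for any subset $I$ of the column indices one has $\{0\}\neq \mathrm{Lin}(a_i;\ i\in I)\cap\mathrm{Lin}(a_j;\ j\notin I)$; the ring $R(A,P_0)$ is called indecomposable if $A$ is indecomposable and $l_{ij}n_i>1$ holds for all $i$ (and $j$). Here $m^{(i)}$ denotes the number of variables $S_k$ in the data for $R(A^{(i)},P_0^{(i)})$. *)

theory Defs
  imports "HOL-Library.Poly_Mapping" "HOL-Algebra.QuotRing" "HOL-Algebra.RingHom"
    "Jordan_Normal_Form.DL_Rank" "Jordan_Normal_Form.Matrix_Kernel"
begin

datatype var = T nat nat | S nat

type_synonym 'v cpoly = "('v \<Rightarrow>\<^sub>0 nat) \<Rightarrow>\<^sub>0 complex"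

definition poly_ring :: "'v set \<Rightarrow> 'v cpoly ring" where
  "poly_ring V = \<lparr> carrier = {p. \<forall>\<mu> \<in> Poly_Mapping.keys p. Poly_Mapping.keys \<mu> \<subseteq> V},
                   monoid.mult = (*), one = 1, zero = 0, add = (+) \<rparr>"

definition const_poly :: "complex \<Rightarrow> 'v cpoly" where
  "const_poly c = Poly_Mapping.single 0 c"

text \<open>Data: a complex matrix A (c+1 rows, r+1 columns), the numbers n_0..n_r given by ns,
  the exponents l_ij given by l, and m. The matrix P_0 is determined by l, ns, r and m.\<close>

definition data_r :: "complex mat \<Rightarrow> nat" where "data_r A = dim_col A - 1"
definition data_c :: "complex mat \<Rightarrow> nat" where "data_c A = dim_row A - 1"

definition pairwise_lin_indep_cols :: "complex mat \<Rightarrow> bool" where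
  "pairwise_lin_indep_cols A \<longleftrightarrow>
     (\<forall>i < dim_col A. \<forall>j < dim_col A. i \<noteq> j \<longrightarrow>
        (\<forall>a b :: complex. a \<cdot>\<^sub>v col A i + b \<cdot>\<^sub>v col A j = 0\<^sub>v (dim_row A) \<longrightarrow> a = 0 \<and> b = 0))"

definition valid_data :: "complex mat \<Rightarrow> (nat \<Rightarrow> nat) \<Rightarrow> (nat \<Rightarrow> nat \<Rightarrow> nat) \<Rightarrow> nat \<Rightarrow> bool" where
  "valid_data A ns l m \<longleftrightarrow>
     dim_row A \<ge> 1 \<and> dim_col A \<ge> 1 \<and>
     data_r A \<ge> data_c A \<and> data_c A > 0 \<and>
     (\<forall>i \<le> data_r A. ns i > 0) \<and>
     (\<forall>i \<le> data_r A. \<forall>j \<in> {1..ns i}. l i j > 0) \<and>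
     vec_space.rank (dim_row A) A = dim_row A \<and>
     pairwise_lin_indep_cols A"

definition data_vars :: "complex mat \<Rightarrow> (nat \<Rightarrow> nat) \<Rightarrow> nat \<Rightarrow> var set" where
  "data_vars A ns m = {T i j | i j. i \<le> data_r A \<and> j \<in> {1..ns i}} \<union> {S k | k. k \<in> {1..m}}"

definition mono_T :: "(var \<Rightarrow> 'v) \<Rightarrow> (nat \<Rightarrow> nat) \<Rightarrow> (nat \<Rightarrow> nat \<Rightarrow> nat) \<Rightarrow> nat \<Rightarrow> 'v \<Rightarrow>\<^sub>0 nat" where
  "mono_T emb ns l i = (\<Sum>j\<in>{1..ns i}. Poly_Mapping.single (emb (T i j)) (l i j))"

definition g_poly :: "(var \<Rightarrow> 'v) \<Rightarrow> complex mat \<Rightarrow> (nat \<Rightarrow> nat) \<Rightarrow> (nat \<Rightarrow> nat \<Rightarrow> nat)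
    \<Rightarrow> complex vec \<Rightarrow> 'v cpoly" where
  "g_poly emb A ns l v = (\<Sum>i \<le> data_r A. Poly_Mapping.single (mono_T emb ns l i) (v $ i))"

definition relations :: "(var \<Rightarrow> 'v) \<Rightarrow> complex mat \<Rightarrow> (nat \<Rightarrow> nat) \<Rightarrow> (nat \<Rightarrow> nat \<Rightarrow> nat)
    \<Rightarrow> 'v cpoly set" where
  "relations emb A ns l = {g_poly emb A ns l v | v. v \<in> mat_kernel A}"

text \<open>R(A,P_0) = C[T_ij, S_k] / < g_v ; v \<in> ker A > (as a ring; the C-structure is
  given by the classes of constant polynomials).\<close>
definition R_ring :: "complex mat \<Rightarrow> (nat \<Rightarrow> nat) \<Rightarrow> (nat \<Rightarrow> nat \<Rightarrow> nat) \<Rightarrow> nat \<Rightarrow> var cpoly set ring" where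
  "R_ring A ns l m =
     poly_ring (data_vars A ns m) Quot genideal (poly_ring (data_vars A ns m)) (relations id A ns l)"

definition col_span :: "complex mat \<Rightarrow> nat set \<Rightarrow> complex vec set" where
  "col_span A I = LinearCombinations.module.span class_ring (module_vec TYPE(complex) (dim_row A)) (col A ` I)"

definition indecomposable_mat :: "complex mat \<Rightarrow> bool" where
  "indecomposable_mat A \<longleftrightarrow>
     (\<forall>I. I \<noteq> {} \<and> I \<subset> {0..<dim_col A} \<longrightarrow>
        col_span A I \<inter> col_span A ({0..<dim_col A} - I) \<noteq> {0\<^sub>v (dim_row A)})"

definition indecomposable_data :: "complex mat \<Rightarrow> (nat \<Rightarrow> nat) \<Rightarrow> (nat \<Rightarrow> nat \<Rightarrow> nat) \<Rightarrow> bool" where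
  "indecomposable_data A ns l \<longleftrightarrow>
     indecomposable_mat A \<and> (\<forall>i \<le> data_r A. \<forall>j \<in> {1..ns i}. l i j * ns i > 1)"

text \<open>The tensor product R(A^(1),P_0^(1)) \<otimes> ... \<otimes> R(A^(t),P_0^(t)) \<otimes> C[S_1..S_m'],
  realized (as usual for quotients of polynomial rings in disjoint sets of variables) as the
  polynomial ring in the disjoint union of all variables, the variable x of factor i being
  (i, x) and the free variable S_k being (0, S k), modulo the ideal generated by all relations
  g_v^(i) of all factors.\<close>
definition tensor_vars :: "nat \<Rightarrow> (nat \<Rightarrow> complex mat) \<Rightarrow> (nat \<Rightarrow> nat \<Rightarrow> nat) \<Rightarrow> (nat \<Rightarrow> nat)
    \<Rightarrow> nat \<Rightarrow> (nat \<times> var) set" where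
  "tensor_vars t As nss ms m' =
     (\<Union>i\<in>{1..t}. Pair i ` data_vars (As i) (nss i) (ms i)) \<union> {(0, S k) | k. k \<in> {1..m'}}"

definition tensor_ring :: "nat \<Rightarrow> (nat \<Rightarrow> complex mat) \<Rightarrow> (nat \<Rightarrow> nat \<Rightarrow> nat) \<Rightarrow> (nat \<Rightarrow> nat \<Rightarrow> nat \<Rightarrow> nat)
    \<Rightarrow> (nat \<Rightarrow> nat) \<Rightarrow> nat \<Rightarrow> (nat \<times> var) cpoly set ring" where
  "tensor_ring t As nss ls ms m' =
     poly_ring (tensor_vars t As nss ms m') Quot
       genideal (poly_ring (tensor_vars t As nss ms m'))
         (\<Union>i\<in>{1..t}. relations (Pair i) (As i) (nss i) (ls i))"

definition calg_iso_quot :: "'a cpoly set ring \<Rightarrow> 'b cpoly set ring \<Rightarrow> bool" where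
  "calg_iso_quot R1 R2 \<longleftrightarrow>
     (\<exists>h \<in> ring_iso R1 R2. \<forall>c. \<forall>X \<in> carrier R1. const_poly c \<in> X \<longrightarrow>
         const_poly c \<in> h X)"

end

theory Submission
  imports Defs
begin

(* Let K = ker A. An index i with n_i = l_i1 = 1 contributes a variable T_i that occurs
   linearly in every relation g_v. Choose a maximal set E of such indices onto which K projects;
   then the relations can be solved for the T_i, i \<in> E, and these variables are eliminated.
   On K' = {v \<in> K. v vanishes on E}, call a set of indices splitting if restricting vectors of
   K' to it stays in K'. The splitting sets form a Boolean algebra; its atoms meeting the support
   of K' are the blocks B. Each block gives data (A_B, P_B), where A_B has full row rank and its
   kernel is the restriction of K' to B. A_B is indecomposable because a decomposition of its
   columns would split B further, and l_ij n_i > 1 holds on B because, by maximality of E, no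
   vector of K' involves a linear index outside E. The variables of the remaining indices occur in
   no relation and become additional free variables S_k. The substitution that renames the
   variables and replaces each T_i, i \<in> E, by its solution is inverse, modulo the two ideals, to
   the renaming back, which gives the isomorphism of C-algebras. *)

section \<open>Substitution homomorphisms\<close>

definition Var :: "'v \<Rightarrow> 'v cpoly" where
  "Var x = Poly_Mapping.single (Poly_Mapping.single x 1) 1"

definition subst_monom :: "('v \<Rightarrow> 'w cpoly) \<Rightarrow> ('v \<Rightarrow>\<^sub>0 nat) \<Rightarrow> 'w cpoly" where
  "subst_monom \<sigma> \<mu> = (\<Prod>x\<in>Poly_Mapping.keys \<mu>. \<sigma> x ^ Poly_Mapping.lookup \<mu> x)"

definition subst :: "('v \<Rightarrow> 'w cpoly) \<Rightarrow> 'v cpoly \<Rightarrow> 'w cpoly" where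
  "subst \<sigma> p = (\<Sum>\<mu>\<in>Poly_Mapping.keys p. const_poly (Poly_Mapping.lookup p \<mu>) * subst_monom \<sigma> \<mu>)"

lemma const_poly_mult_single: "const_poly c * Poly_Mapping.single \<mu> d = Poly_Mapping.single \<mu> (c * d)"
  by (simp add: const_poly_def mult_single)

lemma poly_mapping_sum_single_lookup:
  fixes p :: "'a \<Rightarrow>\<^sub>0 'b::comm_monoid_add"
  shows "(\<Sum>\<mu>\<in>Poly_Mapping.keys p. Poly_Mapping.single \<mu> (Poly_Mapping.lookup p \<mu>)) = p"
proof (rule poly_mapping_eqI)
  fix k
  show "Poly_Mapping.lookup (\<Sum>\<mu>\<in>Poly_Mapping.keys p. Poly_Mapping.single \<mu> (Poly_Mapping.lookup p \<mu>)) k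
      = Poly_Mapping.lookup p k"
    by (cases "k \<in> Poly_Mapping.keys p")
       (simp_all add: lookup_sum lookup_single when_def in_keys_iff)
qed

lemma single_sum: "Poly_Mapping.single k (\<Sum>a\<in>A. f a) = (\<Sum>a\<in>A. Poly_Mapping.single k (f a))"
  by (induction A rule: infinite_finite_induct) (simp_all add: single_add)

lemma keys_sum_single_subset:
  "Poly_Mapping.keys (\<Sum>a\<in>A. Poly_Mapping.single (f a) (e a)) \<subseteq> f ` A"
  using Poly_Mapping.keys_sum[of "\<lambda>a. Poly_Mapping.single (f a) (e a)" A] by auto

lemma subst_monom_superset:
  assumes "finite X" "Poly_Mapping.keys \<mu> \<subseteq> X"
  shows "subst_monom \<sigma> \<mu> = (\<Prod>x\<in>X. \<sigma> x ^ Poly_Mapping.lookup \<mu> x)"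
  unfolding subst_monom_def
  by (rule prod.mono_neutral_left) (use assms in \<open>auto simp: in_keys_iff\<close>)

lemma subst_monom_add: "subst_monom \<sigma> (\<mu> + \<nu>) = subst_monom \<sigma> \<mu> * subst_monom \<sigma> \<nu>"
proof -
  let ?X = "Poly_Mapping.keys \<mu> \<union> Poly_Mapping.keys \<nu>"
  have "subst_monom \<sigma> (\<mu> + \<nu>) = (\<Prod>x\<in>?X. \<sigma> x ^ Poly_Mapping.lookup (\<mu> + \<nu>) x)"
    by (rule subst_monom_superset) (auto dest: keys_add[THEN subsetD])
  also have "\<dots> = (\<Prod>x\<in>?X. \<sigma> x ^ Poly_Mapping.lookup \<mu> x * \<sigma> x ^ Poly_Mapping.lookup \<nu> x)"
    by (simp add: lookup_add power_add)
  also have "\<dots> = subst_monom \<sigma> \<mu> * subst_monom \<sigma> \<nu>"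
    by (simp add: prod.distrib subst_monom_superset[of ?X])
  finally show ?thesis .
qed

lemma subst_monom_zero [simp]: "subst_monom \<sigma> 0 = 1"
  by (simp add: subst_monom_def)

lemma subst_monom_single [simp]: "subst_monom \<sigma> (Poly_Mapping.single x e) = \<sigma> x ^ e"
  by (cases "e = 0") (simp_all add: subst_monom_def)

lemma subst_monom_sum: "subst_monom \<sigma> (\<Sum>a\<in>A. f a) = (\<Prod>a\<in>A. subst_monom \<sigma> (f a))"
  by (induction A rule: infinite_finite_induct) (simp_all add: subst_monom_add)

lemma subst_monom_cong:
  "(\<And>x. x \<in> Poly_Mapping.keys \<mu> \<Longrightarrow> \<sigma> x = \<sigma>' x) \<Longrightarrow> subst_monom \<sigma> \<mu> = subst_monom \<sigma>' \<mu>"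
  unfolding subst_monom_def by (rule prod.cong) auto

lemma subst_superset:
  assumes "finite X" "Poly_Mapping.keys p \<subseteq> X"
  shows "subst \<sigma> p = (\<Sum>\<mu>\<in>X. const_poly (Poly_Mapping.lookup p \<mu>) * subst_monom \<sigma> \<mu>)"
  unfolding subst_def
  by (rule sum.mono_neutral_left) (use assms in \<open>auto simp: in_keys_iff const_poly_def\<close>)

lemma subst_single: "subst \<sigma> (Poly_Mapping.single \<mu> c) = const_poly c * subst_monom \<sigma> \<mu>"
  by (cases "c = 0") (simp_all add: subst_def const_poly_def)

lemma subst_zero [simp]: "subst \<sigma> 0 = 0"
  by (simp add: subst_def)

lemma subst_add: "subst \<sigma> (p + q) = subst \<sigma> p + subst \<sigma> q"
proof -
  let ?X = "Poly_Mapping.keys p \<union> Poly_Mapping.keys q"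
  have "subst \<sigma> (p + q) = (\<Sum>\<mu>\<in>?X. const_poly (Poly_Mapping.lookup (p + q) \<mu>) * subst_monom \<sigma> \<mu>)"
    by (rule subst_superset) (auto dest: keys_add[THEN subsetD])
  also have "\<dots> = (\<Sum>\<mu>\<in>?X. const_poly (Poly_Mapping.lookup p \<mu>) * subst_monom \<sigma> \<mu>
      + const_poly (Poly_Mapping.lookup q \<mu>) * subst_monom \<sigma> \<mu>)"
    by (simp add: lookup_add const_poly_def single_add distrib_right)
  also have "\<dots> = subst \<sigma> p + subst \<sigma> q"
    by (simp add: sum.distrib subst_superset[of ?X])
  finally show ?thesis .
qed

lemma subst_sum: "subst \<sigma> (\<Sum>a\<in>A. f a) = (\<Sum>a\<in>A. subst \<sigma> (f a))"
  by (induction A rule: infinite_finite_induct) (simp_all add: subst_add)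

lemma subst_mult: "subst \<sigma> (p * q) = subst \<sigma> p * subst \<sigma> q"
proof -
  let ?P = "Poly_Mapping.keys p" and ?Q = "Poly_Mapping.keys q"
  have "p * q = (\<Sum>\<mu>\<in>?P. Poly_Mapping.single \<mu> (Poly_Mapping.lookup p \<mu>)) *
      (\<Sum>\<nu>\<in>?Q. Poly_Mapping.single \<nu> (Poly_Mapping.lookup q \<nu>))"
    by (simp add: poly_mapping_sum_single_lookup)
  also have "\<dots> = (\<Sum>\<mu>\<in>?P. \<Sum>\<nu>\<in>?Q.
      Poly_Mapping.single (\<mu> + \<nu>) (Poly_Mapping.lookup p \<mu> * Poly_Mapping.lookup q \<nu>))"
    by (simp add: sum_distrib_left sum_distrib_right mult_single) (rule sum.swap)
  finally have "subst \<sigma> (p * q) = (\<Sum>\<mu>\<in>?P. \<Sum>\<nu>\<in>?Q.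
      (const_poly (Poly_Mapping.lookup p \<mu>) * subst_monom \<sigma> \<mu>) *
      (const_poly (Poly_Mapping.lookup q \<nu>) * subst_monom \<sigma> \<nu>))"
    by (simp add: subst_sum subst_single subst_monom_add const_poly_def mult_single algebra_simps)
  also have "\<dots> = subst \<sigma> p * subst \<sigma> q"
    unfolding subst_def by (rule sum_product[symmetric])
  finally show ?thesis .
qed

lemma subst_const [simp]: "subst \<sigma> (const_poly c) = const_poly c"
  by (simp add: const_poly_def subst_single)

lemma subst_one [simp]: "subst \<sigma> 1 = 1"
  using subst_const[of \<sigma> 1] by (simp add: const_poly_def)

lemma subst_Var [simp]: "subst \<sigma> (Var x) = \<sigma> x"
  by (simp add: Var_def subst_single const_poly_def)

lemma subst_prod: "subst \<sigma> (\<Prod>a\<in>A. f a) = (\<Prod>a\<in>A. subst \<sigma> (f a))"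
  by (induction A rule: infinite_finite_induct) (simp_all add: subst_mult)

lemma subst_power: "subst \<sigma> (p ^ n) = subst \<sigma> p ^ n"
  by (induction n) (simp_all add: subst_mult)

lemma subst_subst: "subst \<sigma> (subst \<tau> p) = subst (\<lambda>x. subst \<sigma> (\<tau> x)) p"
  by (simp add: subst_def[of \<tau>] subst_def[of "\<lambda>x. subst \<sigma> (\<tau> x)"] subst_sum subst_mult
      subst_monom_def subst_prod subst_power)

lemma subst_cong:
  "(\<And>\<mu> x. \<mu> \<in> Poly_Mapping.keys p \<Longrightarrow> x \<in> Poly_Mapping.keys \<mu> \<Longrightarrow> \<sigma> x = \<sigma>' x) \<Longrightarrow>
    subst \<sigma> p = subst \<sigma>' p"
  unfolding subst_def by (rule sum.cong, simp, metis subst_monom_cong)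

lemma Var_power: "Var x ^ e = Poly_Mapping.single (Poly_Mapping.single x e) 1"
  by (induction e) (simp_all add: Var_def mult_single single_add[symmetric])

lemma prod_single_one:
  "(\<Prod>a\<in>A. Poly_Mapping.single (f a) (1::'b::comm_semiring_1)) = Poly_Mapping.single (\<Sum>a\<in>A. f a) 1"
  by (induction A rule: infinite_finite_induct) (simp_all add: mult_single)

lemma subst_monom_rename:
  "subst_monom (\<lambda>y. Var (\<rho> y)) (\<Sum>a\<in>A. Poly_Mapping.single (f a) (e a)) =
   Poly_Mapping.single (\<Sum>a\<in>A. Poly_Mapping.single (\<rho> (f a)) (e a)) 1"
  by (simp add: subst_monom_sum Var_power prod_single_one)

lemma subst_rename_single:
  "subst (\<lambda>y. Var (\<rho> y)) (Poly_Mapping.single (\<Sum>a\<in>A. Poly_Mapping.single (f a) (e a)) c) =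
   Poly_Mapping.single (\<Sum>a\<in>A. Poly_Mapping.single (\<rho> (f a)) (e a)) c"
  by (simp add: subst_single subst_monom_rename const_poly_mult_single)

lemma subst_monom_Var: "subst_monom Var \<mu> = Poly_Mapping.single \<mu> 1"
  using subst_monom_rename[of id "\<lambda>x. x" "\<lambda>x. Poly_Mapping.lookup \<mu> x" "Poly_Mapping.keys \<mu>"]
  by (simp add: poly_mapping_sum_single_lookup)

lemma subst_Var_id [simp]: "subst Var p = p"
  by (simp add: subst_def subst_monom_Var const_poly_mult_single poly_mapping_sum_single_lookup)

section \<open>Polynomial rings and their ideals\<close>

definition poly_carrier :: "'v set \<Rightarrow> 'v cpoly set" where
  "poly_carrier V = {p. \<forall>\<mu> \<in> Poly_Mapping.keys p. Poly_Mapping.keys \<mu> \<subseteq> V}"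

lemma carrier_poly_ring [simp]: "carrier (poly_ring V) = poly_carrier V"
  by (simp add: poly_ring_def poly_carrier_def)

lemma poly_ring_ops [simp]:
  "mult (poly_ring V) = (*)" "add (poly_ring V) = (+)" "one (poly_ring V) = 1" "zero (poly_ring V) = 0"
  by (simp_all add: poly_ring_def)

lemma poly_carrier_add: "p \<in> poly_carrier V \<Longrightarrow> q \<in> poly_carrier V \<Longrightarrow> p + q \<in> poly_carrier V"
  unfolding poly_carrier_def using keys_add[of p q] by blast

lemma poly_carrier_zero [simp]: "0 \<in> poly_carrier V"
  by (simp add: poly_carrier_def)

lemma poly_carrier_uminus: "p \<in> poly_carrier V \<Longrightarrow> - p \<in> poly_carrier V"
  unfolding poly_carrier_def by (simp add: in_keys_iff)

lemma poly_carrier_single: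
  "Poly_Mapping.keys \<mu> \<subseteq> V \<Longrightarrow> Poly_Mapping.single \<mu> c \<in> poly_carrier V"
  unfolding poly_carrier_def by simp

lemma poly_carrier_const [simp]: "const_poly c \<in> poly_carrier V"
  unfolding const_poly_def by (rule poly_carrier_single) simp

lemma poly_carrier_one [simp]: "1 \<in> poly_carrier V"
  using poly_carrier_single[of 0 V 1] by simp

lemma poly_carrier_mult:
  assumes "p \<in> poly_carrier V" "q \<in> poly_carrier V"
  shows "p * q \<in> poly_carrier V"
  unfolding poly_carrier_def
proof (rule CollectI, rule ballI)
  fix \<mu> assume "\<mu> \<in> Poly_Mapping.keys (p * q)"
  then obtain a b where "\<mu> = a + b" "a \<in> Poly_Mapping.keys p" "b \<in> Poly_Mapping.keys q"
    using keys_mult[of p q] by blast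
  moreover have "Poly_Mapping.keys a \<subseteq> V" "Poly_Mapping.keys b \<subseteq> V"
    using calculation assms by (auto simp: poly_carrier_def)
  ultimately show "Poly_Mapping.keys \<mu> \<subseteq> V"
    using keys_add[of a b] by blast
qed

lemma poly_carrier_sum:
  "(\<And>a. a \<in> A \<Longrightarrow> f a \<in> poly_carrier V) \<Longrightarrow> (\<Sum>a\<in>A. f a) \<in> poly_carrier V"
  by (induction A rule: infinite_finite_induct) (simp_all add: poly_carrier_add)

lemma poly_carrier_prod:
  "(\<And>a. a \<in> A \<Longrightarrow> f a \<in> poly_carrier V) \<Longrightarrow> (\<Prod>a\<in>A. f a) \<in> poly_carrier V"
  by (induction A rule: infinite_finite_induct) (simp_all add: poly_carrier_mult)

lemma poly_carrier_Var: "x \<in> V \<Longrightarrow> Var x \<in> poly_carrier V"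
  unfolding Var_def by (rule poly_carrier_single) simp

lemma poly_carrier_power: "p \<in> poly_carrier V \<Longrightarrow> p ^ n \<in> poly_carrier V"
  by (induction n) (simp_all add: poly_carrier_mult)

lemma poly_carrier_subst:
  assumes p: "p \<in> poly_carrier V" and \<sigma>: "\<And>x. x \<in> V \<Longrightarrow> \<sigma> x \<in> poly_carrier W"
  shows "subst \<sigma> p \<in> poly_carrier W"
  unfolding subst_def subst_monom_def
proof (intro poly_carrier_sum poly_carrier_mult poly_carrier_const poly_carrier_prod poly_carrier_power)
  fix \<mu> x assume "\<mu> \<in> Poly_Mapping.keys p" "x \<in> Poly_Mapping.keys \<mu>"
  then have "x \<in> V" using p by (auto simp: poly_carrier_def)
  then show "\<sigma> x \<in> poly_carrier W" by (rule \<sigma>)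
qed

lemma cring_poly_ring: "cring (poly_ring V)"
proof (rule cringI)
  show "abelian_group (poly_ring V)"
  proof (rule abelian_groupI)
    fix x assume "x \<in> carrier (poly_ring V)"
    then show "\<exists>y\<in>carrier (poly_ring V). y \<oplus>\<^bsub>poly_ring V\<^esub> x = \<zero>\<^bsub>poly_ring V\<^esub>"
      by (intro bexI[of _ "-x"]) (simp_all add: poly_carrier_uminus)
  qed (simp_all add: poly_carrier_add add.assoc add.commute)
  show "Group.comm_monoid (poly_ring V)"
    by (rule comm_monoidI)
       (simp_all add: poly_carrier_mult mult.assoc mult.commute)
qed (simp add: distrib_right)

lemma ring_poly_ring: "ring (poly_ring V)"
  using cring_poly_ring cring.axioms(1) by blast

lemma a_inv_poly_ring [simp]: "p \<in> poly_carrier V \<Longrightarrow> a_inv (poly_ring V) p = - p"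
  using abelian_group.minus_equality[OF ring.is_abelian_group[OF ring_poly_ring], of V "-p" p]
  by (simp add: poly_carrier_uminus)

lemma subst_ring_hom:
  assumes "\<And>x. x \<in> V \<Longrightarrow> \<sigma> x \<in> poly_carrier W"
  shows "subst \<sigma> \<in> Ring.ring_hom (poly_ring V) (poly_ring W)"
  by (rule ring_hom_memI) (auto simp: poly_carrier_subst assms subst_mult subst_add)

lemma ideal_poly_ring_add:
  "ideal I (poly_ring V) \<Longrightarrow> a \<in> I \<Longrightarrow> b \<in> I \<Longrightarrow> a + b \<in> I"
  using additive_subgroup.a_closed[OF ideal.axioms(1)] by fastforce

lemma ideal_poly_ring_zero: "ideal I (poly_ring V) \<Longrightarrow> 0 \<in> I"
  using additive_subgroup.zero_closed[OF ideal.axioms(1)] by fastforce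

lemma ideal_poly_ring_subset: "ideal I (poly_ring V) \<Longrightarrow> I \<subseteq> poly_carrier V"
  using additive_subgroup.a_subset[OF ideal.axioms(1)] by fastforce

lemma ideal_poly_ring_uminus:
  assumes "ideal I (poly_ring V)" "a \<in> I"
  shows "- a \<in> I"
  using additive_subgroup.a_inv_closed[OF ideal.axioms(1)[OF assms(1)] assms(2)]
    ideal_poly_ring_subset[OF assms(1)] assms(2) by auto

lemma ideal_poly_ring_diff:
  "ideal I (poly_ring V) \<Longrightarrow> a \<in> I \<Longrightarrow> b \<in> I \<Longrightarrow> a - b \<in> I"
  using ideal_poly_ring_add[of I V a "-b"] ideal_poly_ring_uminus[of I V b] by simp

lemma ideal_poly_ring_mult:
  "ideal I (poly_ring V) \<Longrightarrow> a \<in> I \<Longrightarrow> r \<in> poly_carrier V \<Longrightarrow> r * a \<in> I"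
  using ideal.I_l_closed[of I "poly_ring V" a r] by simp

lemma ideal_poly_ring_sum:
  "ideal I (poly_ring V) \<Longrightarrow> (\<And>a. a \<in> A \<Longrightarrow> f a \<in> I) \<Longrightarrow> (\<Sum>a\<in>A. f a) \<in> I"
  by (induction A rule: infinite_finite_induct) (simp_all add: ideal_poly_ring_add ideal_poly_ring_zero)

lemma ideal_poly_ring_prod_diff:
  assumes I: "ideal I (poly_ring V)"
    and "\<And>a. a \<in> A \<Longrightarrow> f a \<in> poly_carrier V" "\<And>a. a \<in> A \<Longrightarrow> g a \<in> poly_carrier V"
    and "\<And>a. a \<in> A \<Longrightarrow> f a - g a \<in> I"
  shows "(\<Prod>a\<in>A. f a) - (\<Prod>a\<in>A. g a) \<in> I"
  using assms(2-)
proof (induction A rule: infinite_finite_induct)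
  case (insert x F)
  have "(\<Prod>a\<in>insert x F. f a) - (\<Prod>a\<in>insert x F. g a) =
      f x * ((\<Prod>a\<in>F. f a) - (\<Prod>a\<in>F. g a)) + (\<Prod>a\<in>F. g a) * (f x - g x)"
    using insert.hyps by (simp add: algebra_simps)
  also have "\<dots> \<in> I"
    using insert by (intro ideal_poly_ring_add[OF I] ideal_poly_ring_mult[OF I] poly_carrier_prod) auto
  finally show ?case .
qed (simp_all add: ideal_poly_ring_zero[OF I])

lemma ideal_poly_ring_power_diff:
  assumes I: "ideal I (poly_ring V)" and "a \<in> poly_carrier V" "b \<in> poly_carrier V" "a - b \<in> I"
  shows "a ^ n - b ^ n \<in> I"
  using ideal_poly_ring_prod_diff[OF I, of "{..<n}" "\<lambda>_. a" "\<lambda>_. b"] assms by simp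

lemma genideal_poly_ring_ideal:
  "G \<subseteq> poly_carrier V \<Longrightarrow> ideal (genideal (poly_ring V) G) (poly_ring V)"
  using ring.genideal_ideal[OF ring_poly_ring, of G V] by simp

lemma genideal_poly_ring_self:
  "G \<subseteq> poly_carrier V \<Longrightarrow> g \<in> G \<Longrightarrow> g \<in> genideal (poly_ring V) G"
  using ring.genideal_self[OF ring_poly_ring, of G V] by auto

lemma subst_diff_self_in_ideal:
  assumes I: "ideal I (poly_ring V)" and p: "p \<in> poly_carrier V"
    and \<theta>: "\<And>x. x \<in> V \<Longrightarrow> \<theta> x \<in> poly_carrier V" "\<And>x. x \<in> V \<Longrightarrow> \<theta> x - Var x \<in> I"
  shows "subst \<theta> p - p \<in> I"
proof -
  have "subst \<theta> p - p = subst \<theta> p - subst Var p" by simp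
  also have "\<dots> = (\<Sum>\<mu>\<in>Poly_Mapping.keys p.
      const_poly (Poly_Mapping.lookup p \<mu>) * (subst_monom \<theta> \<mu> - subst_monom Var \<mu>))"
    unfolding subst_def by (simp add: sum_subtractf right_diff_distrib)
  also have "\<dots> \<in> I"
  proof (intro ideal_poly_ring_sum[OF I] ideal_poly_ring_mult[OF I] poly_carrier_const)
    fix \<mu> assume "\<mu> \<in> Poly_Mapping.keys p"
    then have "Poly_Mapping.keys \<mu> \<subseteq> V" using p by (auto simp: poly_carrier_def)
    then show "subst_monom \<theta> \<mu> - subst_monom Var \<mu> \<in> I"
      unfolding subst_monom_def
      by (intro ideal_poly_ring_prod_diff[OF I] ideal_poly_ring_power_diff[OF I] poly_carrier_power)
         (auto intro: poly_carrier_Var \<theta>)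
  qed
  finally show ?thesis .
qed

section \<open>Quotients identified by substitutions\<close>

lemma subst_in_ideal_if_generators:
  assumes \<sigma>: "\<And>x. x \<in> V \<Longrightarrow> \<sigma> x \<in> poly_carrier W"
    and G: "G \<subseteq> poly_carrier V" and J: "ideal J (poly_ring W)"
    and gens: "\<And>g. g \<in> G \<Longrightarrow> subst \<sigma> g \<in> J"
    and p: "p \<in> genideal (poly_ring V) G"
  shows "subst \<sigma> p \<in> J"
proof -
  have hom: "ring_hom_ring (poly_ring V) (poly_ring W) (subst \<sigma>)"
    by (intro ring_hom_ringI2 ring_poly_ring subst_ring_hom \<sigma>)
  have "ideal {r \<in> carrier (poly_ring V). subst \<sigma> r \<in> J} (poly_ring V)"
    by (rule ring_hom_ring.ideal_vimage[OF hom J])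
  then have "genideal (poly_ring V) G \<subseteq> {r \<in> carrier (poly_ring V). subst \<sigma> r \<in> J}"
    using G gens by (intro ring.genideal_minimal[OF ring_poly_ring]) auto
  then show ?thesis using p by blast
qed

lemma abelian_subgroup_ideal_poly_ring:
  "ideal I (poly_ring V) \<Longrightarrow> abelian_subgroup I (poly_ring V)"
  using abelian_subgroupI3[OF ideal.axioms(1)] ring.is_abelian_group[OF ring_poly_ring] by blast

lemma rcos_eq_ideal_iff:
  assumes I: "ideal I (poly_ring V)" and x: "x \<in> poly_carrier V"
  shows "I +>\<^bsub>poly_ring V\<^esub> x = I \<longleftrightarrow> x \<in> I"
  using abelian_subgroup.a_rcos_self[OF abelian_subgroup_ideal_poly_ring[OF I], of x] x
    abelian_subgroup.a_rcos_const[OF abelian_subgroup_ideal_poly_ring[OF I], of x]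
  by auto

lemma subst_subst_inverse:
  assumes "\<And>y. y \<in> W \<Longrightarrow> subst \<sigma> (\<tau> y) = Var y" and "q \<in> poly_carrier W"
  shows "subst \<sigma> (subst \<tau> q) = q"
proof -
  have "subst \<sigma> (subst \<tau> q) = subst Var q"
    unfolding subst_subst using assms by (intro subst_cong) (auto simp: poly_carrier_def)
  then show ?thesis by simp
qed

locale inverse_substitutions =
  fixes V :: "'v set" and W :: "'w set" and GV :: "'v cpoly set" and GW :: "'w cpoly set"
    and \<sigma> :: "'v \<Rightarrow> 'w cpoly" and \<tau> :: "'w \<Rightarrow> 'v cpoly"
  assumes \<sigma>_carrier: "\<And>x. x \<in> V \<Longrightarrow> \<sigma> x \<in> poly_carrier W"
    and \<tau>_carrier: "\<And>y. y \<in> W \<Longrightarrow> \<tau> y \<in> poly_carrier V"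
    and GV_carrier: "GV \<subseteq> poly_carrier V" and GW_carrier: "GW \<subseteq> poly_carrier W"
    and subst_\<sigma>_\<tau>: "\<And>y. y \<in> W \<Longrightarrow> subst \<sigma> (\<tau> y) = Var y"
    and subst_\<tau>_\<sigma>: "\<And>x. x \<in> V \<Longrightarrow> subst \<tau> (\<sigma> x) - Var x \<in> genideal (poly_ring V) GV"
    and subst_\<sigma>_GV: "\<And>g. g \<in> GV \<Longrightarrow> subst \<sigma> g \<in> genideal (poly_ring W) GW"
    and subst_\<tau>_GW: "\<And>g. g \<in> GW \<Longrightarrow> subst \<tau> g \<in> genideal (poly_ring V) GV"
begin

abbreviation "IV \<equiv> genideal (poly_ring V) GV"
abbreviation "IW \<equiv> genideal (poly_ring W) GW"

lemma ideal_IV: "ideal IV (poly_ring V)"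
  by (rule genideal_poly_ring_ideal[OF GV_carrier])

lemma ideal_IW: "ideal IW (poly_ring W)"
  by (rule genideal_poly_ring_ideal[OF GW_carrier])

lemma subst_\<sigma>_in_IW_iff:
  assumes p: "p \<in> poly_carrier V"
  shows "subst \<sigma> p \<in> IW \<longleftrightarrow> p \<in> IV"
proof
  assume "p \<in> IV"
  then show "subst \<sigma> p \<in> IW"
    by (intro subst_in_ideal_if_generators[OF \<sigma>_carrier GV_carrier ideal_IW subst_\<sigma>_GV])
next
  assume "subst \<sigma> p \<in> IW"
  then have "subst \<tau> (subst \<sigma> p) \<in> IV"
    by (intro subst_in_ideal_if_generators[OF \<tau>_carrier GW_carrier ideal_IV subst_\<tau>_GW])
  moreover have "subst \<tau> (subst \<sigma> p) - p \<in> IV"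
    unfolding subst_subst
    by (rule subst_diff_self_in_ideal[OF ideal_IV p])
       (auto intro: poly_carrier_subst \<sigma>_carrier \<tau>_carrier subst_\<tau>_\<sigma>)
  ultimately have "subst \<tau> (subst \<sigma> p) - (subst \<tau> (subst \<sigma> p) - p) \<in> IV"
    by (rule ideal_poly_ring_diff[OF ideal_IV])
  then show "p \<in> IV" by simp
qed

definition quot_map :: "'v cpoly \<Rightarrow> 'w cpoly set" where
  "quot_map p = IW +>\<^bsub>poly_ring W\<^esub> subst \<sigma> p"

lemma quot_map_ring_hom_ring: "ring_hom_ring (poly_ring V) (poly_ring W Quot IW) quot_map"
proof (rule ring_hom_ringI2[OF ring_poly_ring ideal.quotient_is_ring[OF ideal_IW]])
  show "quot_map \<in> Ring.ring_hom (poly_ring V) (poly_ring W Quot IW)"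
    unfolding quot_map_def[abs_def]
    using ring_hom_trans[OF subst_ring_hom[OF \<sigma>_carrier] ideal.rcos_ring_hom[OF ideal_IW]]
    by (simp add: comp_def)
qed

lemma quot_map_surj: "quot_map ` carrier (poly_ring V) = carrier (poly_ring W Quot IW)"
proof
  show "quot_map ` carrier (poly_ring V) \<subseteq> carrier (poly_ring W Quot IW)"
    using ring_hom_ring.homh[OF quot_map_ring_hom_ring] by (auto simp: Ring.ring_hom_def)
  show "carrier (poly_ring W Quot IW) \<subseteq> quot_map ` carrier (poly_ring V)"
  proof
    fix X assume "X \<in> carrier (poly_ring W Quot IW)"
    then obtain q where q: "q \<in> poly_carrier W" "X = IW +>\<^bsub>poly_ring W\<^esub> q"
      by (auto simp: FactRing_def A_RCOSETS_def')
    then have "quot_map (subst \<tau> q) = X"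
      by (simp add: quot_map_def subst_subst_inverse[OF subst_\<sigma>_\<tau>])
    then show "X \<in> quot_map ` carrier (poly_ring V)"
      using poly_carrier_subst[OF q(1) \<tau>_carrier] by force
  qed
qed

lemma quot_map_kernel: "a_kernel (poly_ring V) (poly_ring W Quot IW) quot_map = IV"
proof -
  have "quot_map p = IW \<longleftrightarrow> p \<in> IV" if p: "p \<in> poly_carrier V" for p
    unfolding quot_map_def
    using rcos_eq_ideal_iff[OF ideal_IW poly_carrier_subst[OF p \<sigma>_carrier]] subst_\<sigma>_in_IW_iff[OF p]
    by simp
  then show ?thesis
    using ideal_poly_ring_subset[OF ideal_IV] by (auto simp: a_kernel_def' FactRing_def)
qed

theorem calg_iso_quot: "calg_iso_quot (poly_ring V Quot IV) (poly_ring W Quot IW)"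
proof -
  have iso: "(\<lambda>X. the_elem (quot_map ` X)) \<in> ring_iso (poly_ring V Quot IV) (poly_ring W Quot IW)"
    using ring_hom_ring.FactRing_iso_set[OF quot_map_ring_hom_ring quot_map_surj]
    unfolding quot_map_kernel .
  show ?thesis
    unfolding calg_iso_quot_def
  proof (rule bexI[OF _ iso], intro allI ballI impI)
    fix c X assume X: "X \<in> carrier (poly_ring V Quot IV)" and cX: "const_poly c \<in> X"
    obtain Y where Y: "quot_map ` X = {Y}"
      using ring_hom_ring.the_elem_wf[OF quot_map_ring_hom_ring, unfolded quot_map_kernel, OF X]
      by blast
    then have "Y = quot_map (const_poly c)"
      using cX by blast
    then have "the_elem (quot_map ` X) = IW +>\<^bsub>poly_ring W\<^esub> const_poly c"
      unfolding Y by (simp add: quot_map_def)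
    then show "const_poly c \<in> the_elem (quot_map ` X)"
      using abelian_subgroup.a_rcos_self[OF abelian_subgroup_ideal_poly_ring[OF ideal_IW]] by simp
  qed
qed

end

section \<open>Linear algebra\<close>

lemma downward_closed_eq_lessThan_card:
  fixes X :: "nat set"
  assumes "finite X" and "\<And>i j. i \<in> X \<Longrightarrow> j \<le> i \<Longrightarrow> j \<in> X"
  shows "X = {..<card X}"
proof (cases "X = {}")
  case False
  then have "Max X \<in> X" using assms(1) by simp
  then have "X = {..Max X}"
    using assms by (auto intro: Max_ge)
  then show ?thesis by (metis card_atMost lessThan_Suc_atMost)
qed simp

lemma (in vec_space) rank_le_dim_row:
  assumes M: "M \<in> carrier_mat n nc"
  shows "rank M \<le> n"
proof -
  obtain S where S: "maximal S (\<lambda>T. T \<subseteq> set (cols M) \<and> lin_indpt T)"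
    using maximal_exists[of "\<lambda>T. T \<subseteq> set (cols M) \<and> lin_indpt T" "card (set (cols M))" "{}"]
    by (meson List.finite_set card_mono empty_iff empty_subsetI finite_lin_indpt2 rev_finite_subset)
  then have "S \<subseteq> carrier_vec n" "lin_indpt S"
    using cols_dim[of M] M unfolding maximal_def by auto
  then have "card S \<le> n"
    using li_le_dim(2)[OF fin_dim] dim_is_n by simp
  then show ?thesis using rank_card_indpt[OF M S] by simp
qed

lemma (in vec_space) rank_eq_dim_row_if_unit_cols:
  assumes M: "M \<in> carrier_mat n nc"
    and unit: "\<And>i. i < n \<Longrightarrow> \<exists>j < nc. col M j = unit_vec n i"
  shows "rank M = n"
proof -
  have "set (unit_vecs n) \<subseteq> set (cols M)"
  proof
    fix x :: "'a vec" assume "x \<in> set (unit_vecs n)"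
    then obtain i where "i < n" "x = unit_vec n i" unfolding unit_vecs_def by auto
    then obtain j where "j < nc" "x = col M j" using unit by metis
    then show "x \<in> set (cols M)" using M unfolding cols_def by auto
  qed
  moreover have "lin_indpt (set (unit_vecs n))"
    using unit_vecs_basis unfolding basis_def by simp
  ultimately have "rank M \<ge> card (set (unit_vecs n :: 'a vec list))"
    by (rule rank_ge_card_indpt[OF M])
  moreover have "card (set (unit_vecs n :: 'a vec list)) = n"
    using distinct_card[OF unit_vecs_distinct] by simp
  ultimately show ?thesis
    using rank_le_dim_row[OF M] by linarith
qed

lemma pivot_rows_eq_lessThan:
  assumes pf: "pivot_fun C f n" and dim: "dim_row C = nr"
  defines "k \<equiv> card {i. i < nr \<and> f i < n}"
  shows "{i. i < nr \<and> f i < n} = {..<k}"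
  unfolding k_def
proof (rule downward_closed_eq_lessThan_card)
  note pivot = pivot_funD[OF dim pf]
  fix i j assume i: "i \<in> {i. i < nr \<and> f i < n}" and ji: "j \<le> i"
  have "f j' < n" if "j' \<le> i" for j'
    using that
  proof (induction "i - j'" arbitrary: j')
    case 0 then show ?case using i by simp
  next
    case (Suc d)
    then have "f (Suc j') < n" "Suc j' < nr" using i by auto
    then show ?case using pivot(1,3)[of j'] by force
  qed
  then show "j \<in> {i. i < nr \<and> f i < n}" using i ji by auto
qed simp

lemma upper_rows_mult_mat_vec_eq_0_iff:
  fixes C :: "'a :: semiring_0 mat"
  assumes C: "C \<in> carrier_mat nr n" and k: "k \<le> nr"
    and zero_rows: "\<And>i. k \<le> i \<Longrightarrow> i < nr \<Longrightarrow> row C i = 0\<^sub>v n"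
    and w: "w \<in> carrier_vec n"
  shows "mat k n (\<lambda>(i, j). C $$ (i, j)) *\<^sub>v w = 0\<^sub>v k \<longleftrightarrow> C *\<^sub>v w = 0\<^sub>v nr"
proof -
  let ?M = "mat k n (\<lambda>(i, j). C $$ (i, j))"
  have upper: "(?M *\<^sub>v w) $ i = (C *\<^sub>v w) $ i" if "i < k" for i
  proof -
    have "row ?M i = row C i" using that k C by (auto simp: row_def)
    then show ?thesis using that k C by simp
  qed
  have lower: "(C *\<^sub>v w) $ i = 0" if "k \<le> i" "i < nr" for i
  proof -
    have "row C i = 0\<^sub>v n" by (rule zero_rows[OF that])
    then show ?thesis using that(2) C w by simp
  qed
  show ?thesis
  proof
    assume Mw: "?M *\<^sub>v w = 0\<^sub>v k"
    show "C *\<^sub>v w = 0\<^sub>v nr"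
    proof (rule eq_vecI)
      fix i assume "i < dim_vec (0\<^sub>v nr :: 'a vec)"
      then have i: "i < nr" by simp
      show "(C *\<^sub>v w) $ i = 0\<^sub>v nr $ i"
      proof (cases "i < k")
        case True
        then have "(C *\<^sub>v w) $ i = (?M *\<^sub>v w) $ i" by (rule upper[symmetric])
        also have "\<dots> = 0" unfolding Mw using True by simp
        finally show ?thesis using i by simp
      next
        case False
        then show ?thesis using lower i by simp
      qed
    qed (use C in simp)
  next
    assume Cw: "C *\<^sub>v w = 0\<^sub>v nr"
    show "?M *\<^sub>v w = 0\<^sub>v k"
    proof (rule eq_vecI)
      fix i assume "i < dim_vec (0\<^sub>v k :: 'a vec)"
      then show "(?M *\<^sub>v w) $ i = 0\<^sub>v k $ i" using upper Cw k by simp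
    qed simp
  qed
qed

lemma exists_full_rank_same_kernel:
  fixes B :: "'a :: field mat"
  assumes B: "B \<in> carrier_mat nr n"
  shows "\<exists>k M. M \<in> carrier_mat k n \<and> vec_space.rank k M = k \<and>
     (\<forall>w\<in>carrier_vec n. M *\<^sub>v w = 0\<^sub>v k \<longleftrightarrow> B *\<^sub>v w = 0\<^sub>v nr)"
proof -
  define C where "C = gauss_jordan_single B"
  note gauss = gauss_jordan_single[OF B C_def[symmetric]]
  have C: "C \<in> carrier_mat nr n" by (rule gauss(2))
  then have dim: "dim_row C = nr" by simp
  obtain f where pf: "pivot_fun C f n"
    using gauss(3) C unfolding row_echelon_form_def by auto
  note pivot = pivot_funD[OF dim pf]
  define k where "k = card {i. i < nr \<and> f i < n}"
  have rows: "{i. i < nr \<and> f i < n} = {..<k}"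
    unfolding k_def by (rule pivot_rows_eq_lessThan[OF pf dim])
  have fk: "f i < n" and "i < nr" if "i < k" for i
    using that rows by (metis lessThan_iff mem_Collect_eq)+
  then have kle: "k \<le> nr"
    by (metis le_refl not_le)
  have zero_rows: "row C i = 0\<^sub>v n" if "k \<le> i" "i < nr" for i
  proof -
    have "i \<notin> {i. i < nr \<and> f i < n}" unfolding rows using that(1) by simp
    then have "f i = n" using pivot(1)[OF that(2)] that(2) by simp
    then show ?thesis using pivot_fun_zero_row_iff[OF pf C that(2)] by simp
  qed
  define M where "M = mat k n (\<lambda>(i, j). C $$ (i, j))"
  have M: "M \<in> carrier_mat k n" by (simp add: M_def)
  have "M *\<^sub>v w = 0\<^sub>v k \<longleftrightarrow> B *\<^sub>v w = 0\<^sub>v nr" if w: "w \<in> carrier_vec n" for w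
    using gauss(1)[OF w] upper_rows_mult_mat_vec_eq_0_iff[OF C kle zero_rows w] by (simp add: M_def)
  moreover have "vec_space.rank k M = k"
  proof (rule vec_space.rank_eq_dim_row_if_unit_cols[OF M])
    fix i assume i: "i < k"
    have "col M (f i) = unit_vec k i"
      using pivot(4)[of i] pivot(5)[of i] i kle fk C by (auto simp: M_def unit_vec_def)
    then show "\<exists>j < n. col M j = unit_vec k i" using fk[OF i] by blast
  qed
  ultimately show ?thesis using M by blast
qed

lemma mult_mat_vec_vec_index:
  assumes "M \<in> carrier_mat k n" "i < k"
  shows "(M *\<^sub>v vec n g) $ i = (\<Sum>p<n. M $$ (i, p) * g p)"
  using assms by (auto simp: scalar_prod_def row_def lessThan_atLeast0 intro!: sum.cong)

lemma mult_mat_vec_two_entries: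
  fixes M :: "'a :: comm_semiring_0 mat"
  assumes M: "M \<in> carrier_mat k n" and pq: "p < n" "q < n" "p \<noteq> q"
  shows "M *\<^sub>v vec n (\<lambda>r. if r = p then a else if r = q then b else 0) = a \<cdot>\<^sub>v col M p + b \<cdot>\<^sub>v col M q"
proof (rule eq_vecI)
  fix i assume "i < dim_vec (a \<cdot>\<^sub>v col M p + b \<cdot>\<^sub>v col M q)"
  then have i: "i < k" using M by simp
  have "(M *\<^sub>v vec n (\<lambda>r. if r = p then a else if r = q then b else 0)) $ i =
      (\<Sum>r<n. M $$ (i, r) * (if r = p then a else if r = q then b else 0))"
    by (rule mult_mat_vec_vec_index[OF M i])
  also have "\<dots> = (\<Sum>r<n. (if r = p then M $$ (i, p) * a else 0) + (if r = q then M $$ (i, q) * b else 0))"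
    using pq by (intro sum.cong) auto
  also have "\<dots> = (a \<cdot>\<^sub>v col M p + b \<cdot>\<^sub>v col M q) $ i"
    using M i pq by (simp add: sum.distrib mult.commute)
  finally show "(M *\<^sub>v vec n (\<lambda>r. if r = p then a else if r = q then b else 0)) $ i =
      (a \<cdot>\<^sub>v col M p + b \<cdot>\<^sub>v col M q) $ i" .
qed (use M in simp)

lemma mult_mat_vec_in_col_span:
  fixes M :: "complex mat"
  assumes M: "M \<in> carrier_mat k n" and I: "I \<subseteq> {..<n}"
  shows "M *\<^sub>v vec n (\<lambda>p. if p \<in> I then c p else 0) \<in> col_span M I"
proof -
  interpret vs: vec_space "TYPE(complex)" k .
  have sub: "col M ` I \<subseteq> carrier_vec k" using M by auto
  have span: "LinearCombinations.submodule class_ring (vs.span (col M ` I)) vs.V"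
    by (rule vs.span_is_submodule[OF sub])
  have "finite I" using I finite_subset by blast
  have "M *\<^sub>v vec n (\<lambda>p. if p \<in> I' then c p else 0) \<in> vs.span (col M ` I)" if "I' \<subseteq> I" for I'
    using finite_subset[OF that \<open>finite I\<close>] that
  proof (induction I' rule: finite_induct)
    case empty
    have "vec n (\<lambda>p. if p \<in> {} then c p else 0) = 0\<^sub>v n"
      by (auto simp: vec_eq_iff)
    moreover have "M *\<^sub>v 0\<^sub>v n = 0\<^sub>v k"
      using M by (intro eq_vecI) auto
    ultimately have "M *\<^sub>v vec n (\<lambda>p. if p \<in> {} then c p else 0) = 0\<^sub>v k"
      by simp
    then show ?case using LinearCombinations.submodule.zero_closed[OF span] by simp
  next
    case (insert x F)
    have x: "x < n" "x \<in> I" using insert.prems I by auto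
    have "vec n (\<lambda>p. if p \<in> insert x F then c p else 0) =
        vec n (\<lambda>p. if p \<in> F then c p else 0) + c x \<cdot>\<^sub>v unit_vec n x"
      using insert.hyps x by (auto simp: vec_eq_iff unit_vec_def)
    moreover have "M *\<^sub>v unit_vec n x = col M x"
      using M x by (intro eq_vecI) auto
    ultimately have "M *\<^sub>v vec n (\<lambda>p. if p \<in> insert x F then c p else 0) =
        M *\<^sub>v vec n (\<lambda>p. if p \<in> F then c p else 0) + c x \<cdot>\<^sub>v col M x"
      using M x by (simp add: mult_add_distrib_mat_vec[OF M] mult_mat_vec[OF M])
    moreover have "c x \<cdot>\<^sub>v col M x \<in> vs.span (col M ` I)"
      using LinearCombinations.submodule.smult_closed[OF span] vs.in_own_span[OF sub] x M by auto
    ultimately show ?case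
      using insert LinearCombinations.submodule.m_closed[OF span] by simp
  qed
  then show ?thesis unfolding col_span_def using M by simp
qed

lemma mult_mat_vec_restrict_eq_zero:
  fixes M :: "complex mat"
  assumes M: "M \<in> carrier_mat k n" and I: "I \<subseteq> {..<n}"
    and disjoint: "col_span M I \<inter> col_span M ({0..<n} - I) = {0\<^sub>v k}"
    and w: "w \<in> carrier_vec n" and Mw: "M *\<^sub>v w = 0\<^sub>v k"
  shows "M *\<^sub>v vec n (\<lambda>p. if p \<in> I then w $ p else 0) = 0\<^sub>v k"
proof -
  define wI where "wI = vec n (\<lambda>p. if p \<in> I then w $ p else 0)"
  define wJ where "wJ = vec n (\<lambda>p. if p \<in> {0..<n} - I then - (w $ p) else 0)"
  have "wI = w + wJ" using w by (auto simp: wI_def wJ_def vec_eq_iff)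
  then have "M *\<^sub>v wI = M *\<^sub>v wJ"
    using M w Mw by (simp add: mult_add_distrib_mat_vec[OF M] wJ_def)
  moreover have "M *\<^sub>v wI \<in> col_span M I"
    unfolding wI_def by (rule mult_mat_vec_in_col_span[OF M I])
  moreover have "M *\<^sub>v wJ \<in> col_span M ({0..<n} - I)"
    unfolding wJ_def by (rule mult_mat_vec_in_col_span[OF M]) auto
  ultimately show ?thesis using disjoint unfolding wI_def by auto
qed

lemma pairwise_lin_indep_cols_dim_row_ge2:
  fixes M :: "complex mat"
  assumes M: "M \<in> carrier_mat k n" and n: "n \<ge> 2" and indep: "pairwise_lin_indep_cols M"
  shows "k \<ge> 2"
proof (rule ccontr)
  assume "\<not> k \<ge> 2"
  then have row0: "i = 0" if "i < k" for i using that by simp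
  have indep01: "a = 0 \<and> b = 0" if "a \<cdot>\<^sub>v col M 0 + b \<cdot>\<^sub>v col M 1 = 0\<^sub>v k" for a b
    using that M n by (intro indep[unfolded pairwise_lin_indep_cols_def, rule_format]) auto
  define x where "x = col M 0 $ 0"
  define y where "y = col M 1 $ 0"
  \<comment> \<open>with at most one row, y a_0 - x a_1 = 0\<close>
  have "y \<cdot>\<^sub>v col M 0 + (- x) \<cdot>\<^sub>v col M 1 = 0\<^sub>v k"
    using M n by (intro eq_vecI) (auto simp: x_def y_def dest: row0)
  then have "x = 0 \<and> y = 0" using indep01 by fastforce
  moreover have "(1::complex) \<cdot>\<^sub>v col M 0 + 0 \<cdot>\<^sub>v col M 1 = 0\<^sub>v k"
    using M n calculation by (intro eq_vecI) (auto simp: x_def dest: row0)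
  ultimately show False using indep01 by fastforce
qed

section \<open>The reduced kernel\<close>

definition zero_outside :: "(nat \<Rightarrow> complex) \<Rightarrow> nat set \<Rightarrow> nat \<Rightarrow> complex" where
  "zero_outside f X = (\<lambda>j. if j \<in> X then f j else 0)"

lemma zero_outside_zero_outside: "zero_outside (zero_outside f X) Y = zero_outside f (X \<inter> Y)"
  by (auto simp: zero_outside_def)

locale R_data =
  fixes A :: "complex mat" and ns :: "nat \<Rightarrow> nat" and l :: "nat \<Rightarrow> nat \<Rightarrow> nat" and m :: nat
  assumes valid: "valid_data A ns l m"
begin

abbreviation "nr \<equiv> dim_row A"
abbreviation "nc \<equiv> dim_col A"

lemma dim_col_ge2: "nc \<ge> 2"
  using valid unfolding valid_data_def data_r_def data_c_def by auto

lemma ns_pos: "i < nc \<Longrightarrow> ns i > 0"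
  using valid dim_col_ge2 unfolding valid_data_def data_r_def by auto

lemma l_pos: "i < nc \<Longrightarrow> j \<in> {1..ns i} \<Longrightarrow> l i j > 0"
  using valid dim_col_ge2 unfolding valid_data_def data_r_def by auto

lemma pairwise_indep: "pairwise_lin_indep_cols A"
  using valid unfolding valid_data_def by auto

lemma atMost_data_r: "{..data_r A} = {..<nc}"
  using dim_col_ge2 unfolding data_r_def by auto

lemma col_nonzero:
  assumes i: "i < nc"
  shows "col A i \<noteq> 0\<^sub>v nr"
proof
  assume "col A i = 0\<^sub>v nr"
  define j where "j = (if i = 0 then 1 else (0::nat))"
  have j: "j < nc" "i \<noteq> j" using dim_col_ge2 by (auto simp: j_def)
  have "(1::complex) \<cdot>\<^sub>v col A i + 0 \<cdot>\<^sub>v col A j = 0\<^sub>v nr"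
    using \<open>col A i = 0\<^sub>v nr\<close> by (intro eq_vecI) auto
  then show False
    using pairwise_indep i j unfolding pairwise_lin_indep_cols_def by fastforce
qed

definition ker_fun :: "(nat \<Rightarrow> complex) set" where
  "ker_fun = {f. \<forall>a<nr. (\<Sum>j<nc. A $$ (a, j) * f j) = 0}"

lemma ker_fun_zero: "(\<lambda>_. 0) \<in> ker_fun"
  by (simp add: ker_fun_def)

lemma ker_fun_add: "f \<in> ker_fun \<Longrightarrow> g \<in> ker_fun \<Longrightarrow> (\<lambda>j. f j + g j) \<in> ker_fun"
  by (simp add: ker_fun_def distrib_left sum.distrib)

lemma ker_fun_smult: "f \<in> ker_fun \<Longrightarrow> (\<lambda>j. c * f j) \<in> ker_fun"
  by (simp add: ker_fun_def mult.left_commute[of _ c] flip: sum_distrib_left)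

lemma ker_fun_diff: "f \<in> ker_fun \<Longrightarrow> g \<in> ker_fun \<Longrightarrow> (\<lambda>j. f j - g j) \<in> ker_fun"
  by (simp add: ker_fun_def right_diff_distrib sum_subtractf)

lemma ker_fun_cong: "(\<And>j. j < nc \<Longrightarrow> f j = g j) \<Longrightarrow> f \<in> ker_fun \<longleftrightarrow> g \<in> ker_fun"
  by (simp add: ker_fun_def)

lemma ker_fun_sum: "(\<And>i. i \<in> I \<Longrightarrow> F i \<in> ker_fun) \<Longrightarrow> (\<lambda>j. \<Sum>i\<in>I. F i j) \<in> ker_fun"
  by (induction I rule: infinite_finite_induct) (simp_all add: ker_fun_zero ker_fun_add)

lemma mat_kernel_iff_ker_fun: "v \<in> mat_kernel A \<longleftrightarrow> v \<in> carrier_vec nc \<and> (\<lambda>j. v $ j) \<in> ker_fun"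
proof -
  have "A *\<^sub>v v = 0\<^sub>v nr \<longleftrightarrow> (\<forall>a<nr. (\<Sum>j<nc. A $$ (a, j) * v $ j) = 0)" if "v \<in> carrier_vec nc"
    using that by (auto simp: vec_eq_iff scalar_prod_def row_def lessThan_atLeast0 mult.commute
        intro!: sum.cong)
  then show ?thesis by (auto simp: mat_kernel_def ker_fun_def)
qed

lemma vec_mem_mat_kernel: "f \<in> ker_fun \<Longrightarrow> vec nc f \<in> mat_kernel A"
  unfolding mat_kernel_iff_ker_fun using ker_fun_cong[of "\<lambda>j. vec nc f $ j" f] by simp

lemma ker_fun_single_support:
  assumes f: "f \<in> ker_fun" and i: "i < nc" and zero: "\<And>j. j < nc \<Longrightarrow> j \<noteq> i \<Longrightarrow> f j = 0"
  shows "f i = 0"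
proof (rule ccontr)
  assume "f i \<noteq> 0"
  have "(\<Sum>j<nc. A $$ (a, j) * f j) = A $$ (a, i) * f i" for a
    using i zero by (subst sum.remove[of _ i]) (auto intro: sum.neutral)
  then have "col A i = 0\<^sub>v nr"
    using f \<open>f i \<noteq> 0\<close> i by (intro eq_vecI) (auto simp: ker_fun_def)
  then show False using col_nonzero[OF i] by simp
qed

definition lin_idx :: "nat set" where
  "lin_idx = {i. i < nc \<and> ns i = 1 \<and> l i 1 = 1}"

definition eliminable :: "nat set \<Rightarrow> bool" where
  "eliminable E \<longleftrightarrow>
     E \<subseteq> lin_idx \<and> (\<forall>i\<in>E. \<exists>u\<in>ker_fun. u i = 1 \<and> (\<forall>j\<in>E. j \<noteq> i \<longrightarrow> u j = 0))"

lemma ex_max_eliminable: "\<exists>E. eliminable E \<and> (\<forall>E'. eliminable E' \<longrightarrow> card E' \<le> card E)"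
proof -
  have "card E < Suc nc" if "eliminable E" for E
  proof -
    have "E \<subseteq> {..<nc}" using that unfolding eliminable_def lin_idx_def by auto
    then show ?thesis using card_mono[of "{..<nc}" E] by simp
  qed
  moreover have "eliminable {}" by (simp add: eliminable_def)
  ultimately show ?thesis using ex_has_greatest_nat[of eliminable "{}" card "Suc nc"] by blast
qed

definition elim :: "nat set" where
  "elim = (SOME E. eliminable E \<and> (\<forall>E'. eliminable E' \<longrightarrow> card E' \<le> card E))"

lemma eliminable_elim: "eliminable elim"
  and card_eliminable_le: "eliminable E \<Longrightarrow> card E \<le> card elim"
  using someI_ex[OF ex_max_eliminable] unfolding elim_def[symmetric] by auto

lemma elim_subset_lin_idx: "elim \<subseteq> lin_idx"
  using eliminable_elim unfolding eliminable_def by auto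

lemma elim_less_dim_col: "i \<in> elim \<Longrightarrow> i < nc"
  using elim_subset_lin_idx unfolding lin_idx_def by auto

lemma finite_elim: "finite elim"
  using elim_less_dim_col finite_subset[of elim "{..<nc}"] by auto

definition elim_vec :: "nat \<Rightarrow> nat \<Rightarrow> complex" where
  "elim_vec i = (SOME u. u \<in> ker_fun \<and> u i = 1 \<and> (\<forall>j\<in>elim. j \<noteq> i \<longrightarrow> u j = 0))"

lemma
  assumes "i \<in> elim"
  shows elim_vec_ker_fun: "elim_vec i \<in> ker_fun"
    and elim_vec_diag: "elim_vec i i = 1"
    and elim_vec_off_diag: "\<And>j. j \<in> elim \<Longrightarrow> j \<noteq> i \<Longrightarrow> elim_vec i j = 0"
proof -
  have "\<exists>u. u \<in> ker_fun \<and> u i = 1 \<and> (\<forall>j\<in>elim. j \<noteq> i \<longrightarrow> u j = 0)"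
    using eliminable_elim assms unfolding eliminable_def by blast
  from someI_ex[OF this] show "elim_vec i \<in> ker_fun" "elim_vec i i = 1"
    "\<And>j. j \<in> elim \<Longrightarrow> j \<noteq> i \<Longrightarrow> elim_vec i j = 0"
    unfolding elim_vec_def[symmetric] by auto
qed

definition ker_red :: "(nat \<Rightarrow> complex) set" where
  "ker_red = {f \<in> ker_fun. \<forall>i\<in>elim. f i = 0}"

lemma ker_red_ker_fun: "f \<in> ker_red \<Longrightarrow> f \<in> ker_fun"
  by (simp add: ker_red_def)

lemma ker_red_elim: "f \<in> ker_red \<Longrightarrow> i \<in> elim \<Longrightarrow> f i = 0"
  by (simp add: ker_red_def)

lemma ker_red_zero: "(\<lambda>_. 0) \<in> ker_red"
  by (simp add: ker_red_def ker_fun_zero)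

lemma ker_red_diff: "f \<in> ker_red \<Longrightarrow> g \<in> ker_red \<Longrightarrow> (\<lambda>j. f j - g j) \<in> ker_red"
  by (simp add: ker_red_def ker_fun_diff)

lemma ker_red_smult: "f \<in> ker_red \<Longrightarrow> (\<lambda>j. c * f j) \<in> ker_red"
  by (simp add: ker_red_def ker_fun_smult)

lemma ker_red_cong: "(\<And>j. j < nc \<Longrightarrow> f j = g j) \<Longrightarrow> f \<in> ker_red \<longleftrightarrow> g \<in> ker_red"
  unfolding ker_red_def using ker_fun_cong[of f g] elim_less_dim_col by auto

lemma ker_fun_minus_elim_ker_red:
  assumes f: "f \<in> ker_fun"
  shows "(\<lambda>j. f j - (\<Sum>i\<in>elim. f i * elim_vec i j)) \<in> ker_red"
proof -
  have "(\<Sum>i\<in>elim. f i * elim_vec i k) = f k" if k: "k \<in> elim" for k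
    using k finite_elim elim_vec_off_diag[of _ k]
    by (simp add: sum.remove[of _ k] elim_vec_diag sum.neutral)
  moreover have "(\<lambda>j. f j - (\<Sum>i\<in>elim. f i * elim_vec i j)) \<in> ker_fun"
    by (rule ker_fun_diff[OF f ker_fun_sum]) (rule ker_fun_smult[OF elim_vec_ker_fun])
  ultimately show ?thesis by (simp add: ker_red_def)
qed

text \<open>Otherwise insert i elim would be eliminable, contradicting the maximality of elim.\<close>

lemma ker_red_lin_idx_eq_0:
  assumes i: "i \<in> lin_idx" "i \<notin> elim" and f: "f \<in> ker_red"
  shows "f i = 0"
proof (rule ccontr)
  assume "f i \<noteq> 0"
  define g where "g = (\<lambda>j. (1 / f i) * f j)"
  have g: "g \<in> ker_red" "g i = 1"
    unfolding g_def by (rule ker_red_smult[OF f]) (use \<open>f i \<noteq> 0\<close> in simp)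
  have "\<exists>u\<in>ker_fun. u k = 1 \<and> (\<forall>j\<in>insert i elim. j \<noteq> k \<longrightarrow> u j = 0)"
    if k: "k \<in> elim" for k
  proof
    show "(\<lambda>j. elim_vec k j - elim_vec k i * g j) \<in> ker_fun"
      by (rule ker_fun_diff[OF elim_vec_ker_fun[OF k] ker_fun_smult[OF ker_red_ker_fun[OF g(1)]]])
    show "(\<lambda>j. elim_vec k j - elim_vec k i * g j) k = 1 \<and>
        (\<forall>j\<in>insert i elim. j \<noteq> k \<longrightarrow> (\<lambda>j. elim_vec k j - elim_vec k i * g j) j = 0)"
      using elim_vec_diag[OF k] elim_vec_off_diag[OF k] ker_red_elim[OF g(1)] g(2) k by auto
  qed
  then have "eliminable (insert i elim)"
    using g i elim_subset_lin_idx unfolding eliminable_def by (auto simp: ker_red_def)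
  then have "card (insert i elim) \<le> card elim" by (rule card_eliminable_le)
  then show False using i(2) finite_elim by simp
qed

section \<open>Blocks\<close>

definition splitting :: "nat set \<Rightarrow> bool" where
  "splitting X \<longleftrightarrow> (\<forall>f\<in>ker_red. zero_outside f X \<in> ker_red)"

lemma splitting_all: "splitting {..<nc}"
  unfolding splitting_def using ker_red_cong[of "zero_outside _ {..<nc}"] by (auto simp: zero_outside_def)

lemma splitting_Diff: "splitting X \<Longrightarrow> splitting ({..<nc} - X)"
  unfolding splitting_def
proof
  fix f assume X: "\<forall>f\<in>ker_red. zero_outside f X \<in> ker_red" and f: "f \<in> ker_red"
  have "(\<lambda>j. f j - zero_outside f X j) \<in> ker_red" using ker_red_diff[OF f] X f by blast
  moreover have "zero_outside f ({..<nc} - X) j = f j - zero_outside f X j" if "j < nc" for j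
    using that by (simp add: zero_outside_def)
  ultimately show "zero_outside f ({..<nc} - X) \<in> ker_red"
    using ker_red_cong[of "zero_outside f ({..<nc} - X)"] by auto
qed

lemma splitting_Int: "splitting X \<Longrightarrow> splitting Y \<Longrightarrow> splitting (X \<inter> Y)"
  unfolding splitting_def by (metis zero_outside_zero_outside)

lemma splitting_Inter: "finite F \<Longrightarrow> F \<noteq> {} \<Longrightarrow> (\<And>X. X \<in> F \<Longrightarrow> splitting X) \<Longrightarrow> splitting (\<Inter>F)"
  by (induction F rule: finite_ne_induct) (simp_all add: splitting_Int)

definition block :: "nat \<Rightarrow> nat set" where
  "block i = \<Inter>{X. X \<subseteq> {..<nc} \<and> splitting X \<and> i \<in> X}"

lemma
  assumes i: "i < nc"
  shows mem_block: "i \<in> block i"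
    and block_subset: "block i \<subseteq> {..<nc}"
    and splitting_block: "splitting (block i)"
    and block_least: "\<And>X. splitting X \<Longrightarrow> i \<in> X \<Longrightarrow> block i \<subseteq> X"
proof -
  let ?F = "{X. X \<subseteq> {..<nc} \<and> splitting X \<and> i \<in> X}"
  have all: "{..<nc} \<in> ?F" using i splitting_all by simp
  show "i \<in> block i" "block i \<subseteq> {..<nc}" unfolding block_def using all by auto
  have "finite ?F" by (rule finite_subset[of _ "Pow {..<nc}"]) auto
  then show "splitting (block i)" unfolding block_def using all by (intro splitting_Inter) auto
  fix X assume "splitting X" "i \<in> X"
  then have "X \<inter> {..<nc} \<in> ?F" using i splitting_Int[OF _ splitting_all] by auto
  then show "block i \<subseteq> X" unfolding block_def by blast
qed

lemma block_eq:
  assumes i: "i < nc" and j: "j \<in> block i"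
  shows "block j = block i"
proof -
  have jn: "j < nc" using block_subset[OF i] j by auto
  have sub: "block j \<subseteq> block i" by (rule block_least[OF jn splitting_block[OF i] j])
  have "i \<in> block j"
  proof (rule ccontr)
    assume "i \<notin> block j"
    then have "block i \<subseteq> block i \<inter> ({..<nc} - block j)"
      using i mem_block[OF i]
      by (intro block_least splitting_Int splitting_block splitting_Diff jn) auto
    then show False using j mem_block[OF jn] by auto
  qed
  then show ?thesis using sub block_least[OF i splitting_block[OF jn]] by blast
qed

definition supported :: "nat \<Rightarrow> bool" where
  "supported i \<longleftrightarrow> (\<exists>f\<in>ker_red. f i \<noteq> 0)"

lemma block_unsupported:
  assumes i: "i < nc" "\<not> supported i"
  shows "block i = {i}"
proof -
  have "zero_outside f {i} = (\<lambda>_. 0)" if "f \<in> ker_red" for f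
    using that assms by (auto simp: zero_outside_def supported_def)
  then have "splitting {i}" by (simp add: splitting_def ker_red_zero)
  then show ?thesis using block_least[OF i(1), of "{i}"] mem_block[OF i(1)] by auto
qed

lemma supported_block:
  assumes i: "i < nc" "supported i" and j: "j \<in> block i"
  shows "supported j"
proof (rule ccontr)
  assume nj: "\<not> supported j"
  have "j < nc" using block_subset[OF i(1)] j by auto
  then have "block i = {j}" using block_eq[OF i(1) j] block_unsupported nj by simp
  then show False using mem_block[OF i(1)] nj i by auto
qed

lemma elim_unsupported: "i \<in> elim \<Longrightarrow> \<not> supported i"
  unfolding supported_def using ker_red_elim by auto

lemma supported_not_lin_idx: "supported i \<Longrightarrow> i \<notin> lin_idx"
  using ker_red_lin_idx_eq_0 elim_unsupported unfolding supported_def by blast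

definition blocks :: "nat set set" where
  "blocks = block ` {i. i < nc \<and> supported i}"

lemma finite_blocks: "finite blocks"
  unfolding blocks_def by simp

lemma block_in_blocks: "j < nc \<Longrightarrow> supported j \<Longrightarrow> block j \<in> blocks"
  unfolding blocks_def by auto

lemma
  assumes "B \<in> blocks" "j \<in> B"
  shows blocks_less_dim_col: "j < nc"
    and blocks_supported: "supported j"
    and block_blocks: "block j = B"
proof -
  obtain i where i: "i < nc" "supported i" "B = block i" using assms unfolding blocks_def by auto
  show "j < nc" using block_subset[OF i(1)] i assms by auto
  show "supported j" using supported_block[OF i(1,2)] i assms by auto
  show "block j = B" using block_eq[OF i(1)] i assms by auto
qed

lemma blocks_subset: "B \<in> blocks \<Longrightarrow> B \<subseteq> {..<nc}"
  using blocks_less_dim_col by auto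

lemma blocks_disjoint_elim: "B \<in> blocks \<Longrightarrow> B \<inter> elim = {}"
  using blocks_supported elim_unsupported by blast

lemma finite_blocks_mem: "B \<in> blocks \<Longrightarrow> finite B"
  using blocks_subset finite_subset by blast

lemma splitting_blocks: "B \<in> blocks \<Longrightarrow> splitting B"
  unfolding blocks_def using splitting_block by auto

lemma blocks_minimal:
  assumes B: "B \<in> blocks" and X: "X \<subseteq> B" "splitting X" "X \<noteq> {}"
  shows "X = B"
proof -
  obtain k where "k \<in> X" using X by auto
  then have "block k \<subseteq> X" "block k = B"
    using block_least X blocks_less_dim_col[OF B] block_blocks[OF B] by auto
  then show ?thesis using X by auto
qed

lemma ker_red_sum_blocks:
  assumes f: "f \<in> ker_red" and j: "j < nc"
  shows "f j = (\<Sum>B\<in>blocks. zero_outside f B j)"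
proof (cases "supported j")
  case True
  then have B: "block j \<in> blocks" "j \<in> block j"
    using block_in_blocks[OF j] mem_block[OF j] by auto
  have "zero_outside f B j = (if B = block j then f j else 0)" if "B \<in> blocks" for B
  proof (cases "j \<in> B")
    case True
    then have "block j = B" by (rule block_blocks[OF that])
    then show ?thesis using True by (simp add: zero_outside_def)
  next
    case False
    then show ?thesis using B(2) by (auto simp: zero_outside_def)
  qed
  then show ?thesis using B finite_blocks by simp
next
  case False
  then show ?thesis
    using f blocks_supported by (auto simp: supported_def zero_outside_def intro!: sum.neutral)
qed

lemma card_blocks_ge2:
  assumes B: "B \<in> blocks"
  shows "card B \<ge> 2"
proof (rule ccontr)
  assume "\<not> card B \<ge> 2"
  obtain i where i: "i < nc" "supported i" "B = block i" using B unfolding blocks_def by auto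
  then have "i \<in> B" using mem_block by simp
  moreover have "\<forall>a\<in>B. \<forall>b\<in>B. a = b"
    using \<open>\<not> card B \<ge> 2\<close> card_le_Suc0_iff_eq[OF finite_blocks_mem[OF B]] by simp
  ultimately have "B = {i}" by blast
  obtain f where f: "f \<in> ker_red" "f i \<noteq> 0" using i(2) unfolding supported_def by auto
  then have "zero_outside f B \<in> ker_red"
    using splitting_blocks[OF B] unfolding splitting_def by blast
  then have "zero_outside f B \<in> ker_fun" by (rule ker_red_ker_fun)
  then have "zero_outside f B i = 0"
    by (rule ker_fun_single_support[OF _ i(1)]) (simp add: zero_outside_def \<open>B = {i}\<close>)
  then show False using f(2) \<open>B = {i}\<close> by (simp add: zero_outside_def)
qed

end

section \<open>The factors\<close>

definition enum :: "nat set \<Rightarrow> nat \<Rightarrow> nat" where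
  "enum B = (SOME h. bij_betw h {..<card B} B)"

definition enum_pos :: "nat set \<Rightarrow> nat \<Rightarrow> nat" where
  "enum_pos B = inv_into {..<card B} (enum B)"

lemma bij_betw_enum:
  assumes "finite B"
  shows "bij_betw (enum B) {..<card B} B"
proof -
  obtain h where "bij_betw h {..<card B} B"
    using ex_bij_betw_nat_finite[OF assms] by (auto simp: atLeast0LessThan)
  then show ?thesis unfolding enum_def by (rule someI[where P = "\<lambda>h. bij_betw h {..<card B} B"])
qed

lemma
  assumes "finite B"
  shows enum_mem: "p < card B \<Longrightarrow> enum B p \<in> B"
    and enum_pos_less: "i \<in> B \<Longrightarrow> enum_pos B i < card B"
    and enum_enum_pos: "i \<in> B \<Longrightarrow> enum B (enum_pos B i) = i"
    and enum_pos_enum: "p < card B \<Longrightarrow> enum_pos B (enum B p) = p"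
  using bij_betw_enum[OF assms] unfolding enum_pos_def
  by (auto simp: bij_betw_def bij_betw_inv_into_left bij_betw_inv_into_right
      intro: inv_into_into[of _ _ "{..<card B}", simplified])

lemma enum_inj: "finite B \<Longrightarrow> p < card B \<Longrightarrow> q < card B \<Longrightarrow> enum B p = enum B q \<Longrightarrow> p = q"
  by (metis enum_pos_enum)

context R_data
begin

definition block_cols :: "nat set \<Rightarrow> complex mat" where
  "block_cols B = mat nr (card B) (\<lambda>(a, p). A $$ (a, enum B p))"

definition extend_block :: "nat set \<Rightarrow> complex vec \<Rightarrow> nat \<Rightarrow> complex" where
  "extend_block B w = (\<lambda>i. if i \<in> B then w $ enum_pos B i else 0)"

text \<open>valid_data demands full row rank, so the columns of A in B are replaced by a matrix of
  full row rank with the same kernel.\<close>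

definition block_mat :: "nat set \<Rightarrow> complex mat" where
  "block_mat B = (SOME M. M \<in> carrier_mat (dim_row M) (card B) \<and>
      vec_space.rank (dim_row M) M = dim_row M \<and>
      (\<forall>w\<in>carrier_vec (card B). M *\<^sub>v w = 0\<^sub>v (dim_row M) \<longleftrightarrow> block_cols B *\<^sub>v w = 0\<^sub>v nr))"

definition block_ns :: "nat set \<Rightarrow> nat \<Rightarrow> nat" where
  "block_ns B p = ns (enum B p)"

definition block_l :: "nat set \<Rightarrow> nat \<Rightarrow> nat \<Rightarrow> nat" where
  "block_l B p = l (enum B p)"

lemma block_cols_carrier: "block_cols B \<in> carrier_mat nr (card B)"
  by (simp add: block_cols_def)

lemma col_block_cols:
  assumes B: "B \<in> blocks" and p: "p < card B"
  shows "col (block_cols B) p = col A (enum B p)"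
  using p enum_mem[OF finite_blocks_mem[OF B] p] blocks_subset[OF B]
  by (intro eq_vecI) (auto simp: block_cols_def)

lemma extend_vec_enum:
  assumes B: "B \<in> blocks" and I: "I \<subseteq> {..<card B}"
  shows "extend_block B (vec (card B) (\<lambda>p. if p \<in> I then g (enum B p) else 0)) = zero_outside g (enum B ` I)"
proof
  fix i
  have fin: "finite B" by (rule finite_blocks_mem[OF B])
  have "i \<in> enum B ` I \<longleftrightarrow> i \<in> B \<and> enum_pos B i \<in> I"
  proof
    assume "i \<in> enum B ` I"
    then obtain p where "p \<in> I" "i = enum B p" by blast
    then show "i \<in> B \<and> enum_pos B i \<in> I"
      using I enum_mem[OF fin] enum_pos_enum[OF fin] by auto
  next
    assume "i \<in> B \<and> enum_pos B i \<in> I"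
    then show "i \<in> enum B ` I"
      using enum_enum_pos[OF fin] by (metis image_eqI)
  qed
  then show "extend_block B (vec (card B) (\<lambda>p. if p \<in> I then g (enum B p) else 0)) i = zero_outside g (enum B ` I) i"
    using enum_pos_less[OF fin] enum_enum_pos[OF fin] by (auto simp: extend_block_def zero_outside_def)
qed

lemma extend_vec_enum_all:
  "B \<in> blocks \<Longrightarrow> extend_block B (vec (card B) (\<lambda>p. g (enum B p))) = zero_outside g B"
proof -
  assume B: "B \<in> blocks"
  have "vec (card B) (\<lambda>p. g (enum B p)) =
      vec (card B) (\<lambda>p. if p \<in> {..<card B} then g (enum B p) else 0)"
    by auto
  also have "extend_block B \<dots> = zero_outside g (enum B ` {..<card B})"
    by (rule extend_vec_enum[OF B]) simp
  finally show ?thesis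
    using bij_betw_enum[OF finite_blocks_mem[OF B]] by (simp add: bij_betw_def)
qed

lemma block_cols_kernel_iff:
  assumes B: "B \<in> blocks" and w: "w \<in> carrier_vec (card B)"
  shows "block_cols B *\<^sub>v w = 0\<^sub>v nr \<longleftrightarrow> extend_block B w \<in> ker_red"
proof -
  have fin: "finite B" by (rule finite_blocks_mem[OF B])
  have "(block_cols B *\<^sub>v w) $ a = (\<Sum>j<nc. A $$ (a, j) * extend_block B w j)" if a: "a < nr" for a
  proof -
    have "(block_cols B *\<^sub>v w) $ a = (\<Sum>p<card B. A $$ (a, enum B p) * w $ p)"
      using a w by (auto simp: block_cols_def scalar_prod_def row_def lessThan_atLeast0 intro!: sum.cong)
    also have "\<dots> = (\<Sum>p<card B. (\<lambda>j. A $$ (a, j) * w $ enum_pos B j) (enum B p))"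
      by (simp add: enum_pos_enum[OF fin])
    also have "\<dots> = (\<Sum>j\<in>B. A $$ (a, j) * w $ enum_pos B j)"
      by (rule sum.reindex_bij_betw[OF bij_betw_enum[OF fin]])
    also have "\<dots> = (\<Sum>j<nc. A $$ (a, j) * extend_block B w j)"
      using blocks_subset[OF B] by (intro sum.mono_neutral_cong_left) (auto simp: extend_block_def)
    finally show ?thesis .
  qed
  then have "block_cols B *\<^sub>v w = 0\<^sub>v nr \<longleftrightarrow> extend_block B w \<in> ker_fun"
    by (auto simp: vec_eq_iff ker_fun_def block_cols_def)
  then show ?thesis
    using blocks_disjoint_elim[OF B] by (auto simp: ker_red_def extend_block_def)
qed

lemma block_mat_props:
  "block_mat B \<in> carrier_mat (dim_row (block_mat B)) (card B)"
  "vec_space.rank (dim_row (block_mat B)) (block_mat B) = dim_row (block_mat B)"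
  "\<And>w. w \<in> carrier_vec (card B) \<Longrightarrow>
     block_mat B *\<^sub>v w = 0\<^sub>v (dim_row (block_mat B)) \<longleftrightarrow> block_cols B *\<^sub>v w = 0\<^sub>v nr"
proof -
  obtain k M where "M \<in> carrier_mat k (card B)" "vec_space.rank k M = k"
      "\<forall>w\<in>carrier_vec (card B). M *\<^sub>v w = 0\<^sub>v k \<longleftrightarrow> block_cols B *\<^sub>v w = 0\<^sub>v nr"
    using exists_full_rank_same_kernel[OF block_cols_carrier] by blast
  then have "\<exists>M. M \<in> carrier_mat (dim_row M) (card B) \<and> vec_space.rank (dim_row M) M = dim_row M \<and>
      (\<forall>w\<in>carrier_vec (card B). M *\<^sub>v w = 0\<^sub>v (dim_row M) \<longleftrightarrow> block_cols B *\<^sub>v w = 0\<^sub>v nr)"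
    by (intro exI[of _ M]) auto
  from someI_ex[OF this, folded block_mat_def] show
    "block_mat B \<in> carrier_mat (dim_row (block_mat B)) (card B)"
    "vec_space.rank (dim_row (block_mat B)) (block_mat B) = dim_row (block_mat B)"
    "\<And>w. w \<in> carrier_vec (card B) \<Longrightarrow>
       block_mat B *\<^sub>v w = 0\<^sub>v (dim_row (block_mat B)) \<longleftrightarrow> block_cols B *\<^sub>v w = 0\<^sub>v nr"
    by auto
qed

lemma mat_kernel_block_mat:
  assumes "B \<in> blocks"
  shows "w \<in> mat_kernel (block_mat B) \<longleftrightarrow> w \<in> carrier_vec (card B) \<and> extend_block B w \<in> ker_red"
proof -
  have "dim_col (block_mat B) = card B"
    using block_mat_props(1)[where B=B] by simp
  moreover have "block_mat B *\<^sub>v w = 0\<^sub>v (dim_row (block_mat B)) \<longleftrightarrow> extend_block B w \<in> ker_red"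
    if "w \<in> carrier_vec (card B)"
    using block_mat_props(3)[OF that] block_cols_kernel_iff[OF assms that] by simp
  ultimately show ?thesis unfolding mat_kernel_def by auto
qed

lemma pairwise_lin_indep_cols_block_mat:
  assumes B: "B \<in> blocks"
  shows "pairwise_lin_indep_cols (block_mat B)"
  unfolding pairwise_lin_indep_cols_def
proof (intro allI impI)
  fix p q a b
  assume p: "p < dim_col (block_mat B)" and q: "q < dim_col (block_mat B)" and "p \<noteq> q"
    and zero: "a \<cdot>\<^sub>v col (block_mat B) p + b \<cdot>\<^sub>v col (block_mat B) q = 0\<^sub>v (dim_row (block_mat B))"
  note M = block_mat_props(1)[where B=B]
  have pq: "p < card B" "q < card B" using p q M by auto
  define w where "w = vec (card B) (\<lambda>r. if r = p then a else if r = q then b else 0)"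
  have "block_mat B *\<^sub>v w = 0\<^sub>v (dim_row (block_mat B))"
    unfolding w_def mult_mat_vec_two_entries[OF M pq \<open>p \<noteq> q\<close>] by (rule zero)
  then have "block_cols B *\<^sub>v w = 0\<^sub>v nr"
    using block_mat_props(3)[where B=B and w=w] by (simp add: w_def)
  then have "a \<cdot>\<^sub>v col A (enum B p) + b \<cdot>\<^sub>v col A (enum B q) = 0\<^sub>v nr"
    unfolding w_def mult_mat_vec_two_entries[OF block_cols_carrier pq \<open>p \<noteq> q\<close>]
    by (simp add: col_block_cols[OF B pq(1)] col_block_cols[OF B pq(2)])
  moreover have "enum B p < nc" "enum B q < nc" "enum B p \<noteq> enum B q"
    using enum_mem[OF finite_blocks_mem[OF B]] enum_inj[OF finite_blocks_mem[OF B]]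
      blocks_subset[OF B] pq \<open>p \<noteq> q\<close> by blast+
  ultimately show "a = 0 \<and> b = 0"
    using pairwise_indep unfolding pairwise_lin_indep_cols_def by blast
qed

lemma dim_col_block_mat: "dim_col (block_mat B) = card B"
  using block_mat_props(1)[where B=B] by simp

lemma data_r_block_mat: "data_r (block_mat B) = card B - 1"
  by (simp add: data_r_def dim_col_block_mat)

lemma enum_less_dim_col: "B \<in> blocks \<Longrightarrow> p < card B \<Longrightarrow> enum B p < nc"
  using enum_mem[OF finite_blocks_mem] blocks_subset by blast

lemma valid_data_block_mat:
  assumes B: "B \<in> blocks"
  shows "valid_data (block_mat B) (block_ns B) (block_l B) 0"
proof -
  note M = block_mat_props(1)[where B=B]
  have card: "card B \<ge> 2" by (rule card_blocks_ge2[OF B])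
  have "dim_row (block_mat B) \<ge> 2"
    by (rule pairwise_lin_indep_cols_dim_row_ge2[OF M card pairwise_lin_indep_cols_block_mat[OF B]])
  moreover have "dim_row (block_mat B) \<le> card B"
    using vec_space.rank_le_nc[OF M] block_mat_props(2)[where B=B] by simp
  moreover have "\<forall>p \<le> card B - 1. block_ns B p > 0"
    using ns_pos enum_less_dim_col[OF B] card by (auto simp: block_ns_def)
  moreover have "\<forall>p \<le> card B - 1. \<forall>j\<in>{1..block_ns B p}. block_l B p j > 0"
    using l_pos enum_less_dim_col[OF B] card by (auto simp: block_ns_def block_l_def)
  ultimately show ?thesis
    unfolding valid_data_def data_r_def data_c_def
    using card block_mat_props(2)[where B=B] pairwise_lin_indep_cols_block_mat[OF B]
    by (auto simp: dim_col_block_mat)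
qed

lemma block_exponents_gt1:
  assumes B: "B \<in> blocks" and p: "p < card B" and j: "j \<in> {1..block_ns B p}"
  shows "block_l B p j * block_ns B p > 1"
proof -
  define i where "i = enum B p"
  have i: "i < nc" "i \<notin> lin_idx" "j \<in> {1..ns i}"
    using enum_less_dim_col[OF B p] supported_not_lin_idx blocks_supported[OF B] enum_mem[OF _ p]
      finite_blocks_mem[OF B] j by (auto simp: i_def block_ns_def)
  have pos: "l i j > 0" "ns i > 0" using l_pos ns_pos i by auto
  have "l i j * ns i > 1"
  proof (cases "ns i = 1")
    case True
    then have "l i j \<noteq> 1" using i by (auto simp: lin_idx_def)
    then show ?thesis using True pos by simp
  next
    case False
    then have "l i j * ns i \<ge> 1 * 2" using pos by (intro mult_mono) auto
    then show ?thesis by simp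
  qed
  then show ?thesis by (simp add: block_l_def block_ns_def i_def)
qed

lemma splitting_enum_image:
  assumes B: "B \<in> blocks" and I: "I \<subseteq> {..<card B}"
    and disjoint: "col_span (block_mat B) I \<inter> col_span (block_mat B) ({0..<card B} - I) =
      {0\<^sub>v (dim_row (block_mat B))}"
  shows "splitting (enum B ` I)"
  unfolding splitting_def
proof
  fix f assume "f \<in> ker_red"
  let ?w = "vec (card B) (\<lambda>p. f (enum B p))" and ?wI = "vec (card B) (\<lambda>p. if p \<in> I then f (enum B p) else 0)"
  have "extend_block B ?w \<in> ker_red"
    using splitting_blocks[OF B] \<open>f \<in> ker_red\<close> unfolding splitting_def extend_vec_enum_all[OF B] by blast
  then have "block_mat B *\<^sub>v ?w = 0\<^sub>v (dim_row (block_mat B))"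
    using mat_kernel_block_mat[OF B, of ?w] unfolding mat_kernel_def by (simp add: dim_col_block_mat)
  then have "block_mat B *\<^sub>v vec (card B) (\<lambda>p. if p \<in> I then ?w $ p else 0) = 0\<^sub>v (dim_row (block_mat B))"
    by (intro mult_mat_vec_restrict_eq_zero[OF block_mat_props(1) I disjoint]) auto
  moreover have "vec (card B) (\<lambda>p. if p \<in> I then ?w $ p else 0) = ?wI"
    by (intro eq_vecI) auto
  ultimately have "block_mat B *\<^sub>v ?wI = 0\<^sub>v (dim_row (block_mat B))"
    by simp
  then show "zero_outside f (enum B ` I) \<in> ker_red"
    using mat_kernel_block_mat[OF B, of ?wI] extend_vec_enum[OF B I]
    unfolding mat_kernel_def by (simp add: dim_col_block_mat)
qed

lemma indecomposable_mat_block_mat: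
  assumes B: "B \<in> blocks"
  shows "indecomposable_mat (block_mat B)"
  unfolding indecomposable_mat_def dim_col_block_mat
proof (intro allI impI notI)
  fix I assume I: "I \<noteq> {} \<and> I \<subset> {0..<card B}"
    and disjoint: "col_span (block_mat B) I \<inter> col_span (block_mat B) ({0..<card B} - I) =
      {0\<^sub>v (dim_row (block_mat B))}"
  have fin: "finite B" by (rule finite_blocks_mem[OF B])
  have I_sub: "I \<subseteq> {..<card B}" using I by auto
  have "splitting (enum B ` I)" by (rule splitting_enum_image[OF B I_sub disjoint])
  moreover have "enum B ` I \<subseteq> B" "enum B ` I \<noteq> {}"
    using I_sub I enum_mem[OF fin] by auto
  ultimately have "enum B ` I = B" using blocks_minimal[OF B] by blast
  moreover obtain p where "p < card B" "p \<notin> I" using I by auto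
  ultimately show False
    using enum_mem[OF fin] enum_inj[OF fin] I_sub by (metis image_iff subsetD lessThan_iff)
qed

lemma indecomposable_data_block_mat:
  assumes B: "B \<in> blocks"
  shows "indecomposable_data (block_mat B) (block_ns B) (block_l B)"
proof -
  have "p \<le> card B - 1 \<Longrightarrow> p < card B" for p using card_blocks_ge2[OF B] by linarith
  then show ?thesis
    unfolding indecomposable_data_def data_r_block_mat
    using indecomposable_mat_block_mat[OF B] block_exponents_gt1[OF B] by blast
qed

section \<open>The isomorphism\<close>

definition num_blocks :: nat where
  "num_blocks = card blocks"

definition block_at :: "nat \<Rightarrow> nat set" where
  "block_at = (SOME h. bij_betw h {1..num_blocks} blocks)"

lemma bij_betw_block_at: "bij_betw block_at {1..num_blocks} blocks"
  unfolding block_at_def num_blocks_def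
  using ex_bij_betw_nat_finite_1[OF finite_blocks] by (rule someI_ex)

lemma block_at_blocks: "k \<in> {1..num_blocks} \<Longrightarrow> block_at k \<in> blocks"
  using bij_betw_block_at by (auto simp: bij_betw_def)

definition block_index :: "nat \<Rightarrow> nat" where
  "block_index i = inv_into {1..num_blocks} block_at (block i)"

lemma
  assumes "i < nc" "supported i"
  shows block_index_range: "block_index i \<in> {1..num_blocks}"
    and block_at_block_index: "block_at (block_index i) = block i"
proof -
  have "block i \<in> blocks" using block_in_blocks[OF assms] .
  then show "block_index i \<in> {1..num_blocks}"
    unfolding block_index_def using bij_betw_block_at by (metis bij_betw_def inv_into_into)
  show "block_at (block_index i) = block i"
    unfolding block_index_def using bij_betw_inv_into_right[OF bij_betw_block_at] \<open>block i \<in> blocks\<close>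
    by simp
qed

lemma
  assumes k: "k \<in> {1..num_blocks}" and p: "p < card (block_at k)"
  shows block_index_enum: "block_index (enum (block_at k) p) = k"
    and enum_pos_block_enum: "enum_pos (block (enum (block_at k) p)) (enum (block_at k) p) = p"
proof -
  have B: "block_at k \<in> blocks" by (rule block_at_blocks[OF k])
  then have "block (enum (block_at k) p) = block_at k"
    using block_blocks enum_mem[OF finite_blocks_mem p] by blast
  then show "block_index (enum (block_at k) p) = k"
      "enum_pos (block (enum (block_at k) p)) (enum (block_at k) p) = p"
    unfolding block_index_def using bij_betw_inv_into_left[OF bij_betw_block_at k]
      enum_pos_enum[OF finite_blocks_mem[OF B] p] by simp_all
qed

definition free_vars :: "var set" where
  "free_vars = (\<Union>i\<in>{i. i < nc \<and> \<not> supported i \<and> i \<notin> elim}. (\<lambda>j. T i j) ` {1..ns i})"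

definition m_total :: nat where
  "m_total = m + card free_vars"

definition free_S :: "var \<Rightarrow> nat" where
  "free_S = (SOME h. bij_betw h free_vars {m<..m_total})"

lemma finite_free_vars: "finite free_vars"
  unfolding free_vars_def by auto

lemma bij_betw_free_S: "bij_betw free_S free_vars {m<..m_total}"
proof -
  have "card free_vars = card {m<..m_total}" unfolding m_total_def by simp
  then have "\<exists>h. bij_betw h free_vars {m<..m_total}"
    by (rule finite_same_card_bij[OF finite_free_vars finite_greaterThanAtMost])
  then show ?thesis unfolding free_S_def by (rule someI_ex)
qed

lemma m_le_m_total: "m \<le> m_total"
  by (simp add: m_total_def)

fun eliminated :: "var \<Rightarrow> bool" where
  "eliminated (T i j) \<longleftrightarrow> i \<in> elim"
| "eliminated (S k) \<longleftrightarrow> False"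

definition new_var :: "var \<Rightarrow> nat \<times> var" where
  "new_var x = (case x of
      T i j \<Rightarrow> if supported i then (block_index i, T (enum_pos (block i) i) j) else (0, S (free_S x))
    | S k \<Rightarrow> (0, S k))"

definition old_var :: "nat \<times> var \<Rightarrow> var" where
  "old_var y = (case y of
      (k, T p j) \<Rightarrow> T (enum (block_at k) p) j
    | (_, S s) \<Rightarrow> if s \<le> m then S s else inv_into free_vars free_S s)"

definition factor_A :: "nat \<Rightarrow> complex mat" where
  "factor_A k = block_mat (block_at k)"

definition factor_ns :: "nat \<Rightarrow> nat \<Rightarrow> nat" where
  "factor_ns k = block_ns (block_at k)"

definition factor_l :: "nat \<Rightarrow> nat \<Rightarrow> nat \<Rightarrow> nat" where
  "factor_l k = block_l (block_at k)"

definition V :: "var set" where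
  "V = data_vars A ns m"

definition W :: "(nat \<times> var) set" where
  "W = tensor_vars num_blocks factor_A factor_ns (\<lambda>_. 0) m_total"

lemma V_T: "T i j \<in> V \<longleftrightarrow> i < nc \<and> j \<in> {1..ns i}"
  unfolding V_def data_vars_def data_r_def using dim_col_ge2 by auto

lemma V_S: "S k \<in> V \<longleftrightarrow> k \<in> {1..m}"
  unfolding V_def data_vars_def by auto

lemma free_vars_V: "x \<in> free_vars \<Longrightarrow> x \<in> V"
  unfolding free_vars_def by (auto simp: V_T)

lemma W_cases:
  "y \<in> W \<longleftrightarrow>
   (\<exists>k p j. y = (k, T p j) \<and> k \<in> {1..num_blocks} \<and> p < card (block_at k) \<and>
      j \<in> {1..ns (enum (block_at k) p)}) \<or>
   (\<exists>s. y = (0, S s) \<and> s \<in> {1..m_total})"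
proof -
  have "data_vars (factor_A k) (factor_ns k) 0 =
      {T p j | p j. p < card (block_at k) \<and> j \<in> {1..ns (enum (block_at k) p)}}"
    if "k \<in> {1..num_blocks}" for k
    using card_blocks_ge2[OF block_at_blocks[OF that]]
    unfolding data_vars_def factor_A_def factor_ns_def block_ns_def data_r_block_mat by auto
  then show ?thesis unfolding W_def tensor_vars_def by fastforce
qed

lemma W_T: "(k, T p j) \<in> W \<longleftrightarrow>
    k \<in> {1..num_blocks} \<and> p < card (block_at k) \<and> j \<in> {1..ns (enum (block_at k) p)}"
  unfolding W_cases by auto

lemma W_S: "(k, S s) \<in> W \<longleftrightarrow> k = 0 \<and> s \<in> {1..m_total}"
  unfolding W_cases by auto

lemma new_var_W:
  assumes "x \<in> V" and "\<not> eliminated x"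
  shows "new_var x \<in> W"
proof (cases x)
  case (T i j)
  then have ij: "i < nc" "i \<notin> elim" "j \<in> {1..ns i}" using assms by (auto simp: V_T)
  show ?thesis
  proof (cases "supported i")
    case True
    then have "block i \<in> blocks" "i \<in> block i" using block_in_blocks mem_block ij by auto
    then show ?thesis
      using True ij block_index_range block_at_block_index finite_blocks_mem
        enum_pos_less enum_enum_pos
      by (simp add: new_var_def T W_T)
  next
    case False
    then have "x \<in> free_vars" using T ij by (auto simp: free_vars_def)
    then have "free_S x \<in> {m<..m_total}" by (rule bij_betw_apply[OF bij_betw_free_S])
    then show ?thesis using False T by (auto simp: new_var_def W_S)
  qed
next
  case (S k)
  then show ?thesis using assms m_le_m_total by (auto simp: new_var_def V_S W_S)
qed

lemma old_var_new_var:
  assumes "x \<in> V" and "\<not> eliminated x"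
  shows "old_var (new_var x) = x"
proof (cases x)
  case (T i j)
  then have ij: "i < nc" "i \<notin> elim" using assms by (auto simp: V_T)
  show ?thesis
  proof (cases "supported i")
    case True
    then have "block i \<in> blocks" "i \<in> block i" using block_in_blocks mem_block ij by auto
    then show ?thesis
      using True ij block_at_block_index enum_enum_pos[OF finite_blocks_mem]
      by (simp add: new_var_def old_var_def T)
  next
    case False
    then have "x \<in> free_vars" using T ij assms(1) by (auto simp: free_vars_def V_T)
    moreover have "\<not> free_S x \<le> m"
      using bij_betw_apply[OF bij_betw_free_S calculation] by simp
    ultimately show ?thesis
      using False T bij_betw_inv_into_left[OF bij_betw_free_S] by (simp add: new_var_def old_var_def)
  qed
next
  case (S k)
  then show ?thesis using assms by (simp add: new_var_def old_var_def V_S)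
qed

lemma
  assumes "y \<in> W"
  shows old_var_V: "old_var y \<in> V"
    and new_var_old_var: "new_var (old_var y) = y"
    and not_eliminated_old_var: "\<not> eliminated (old_var y)"
proof -
  consider (block) k p j where "y = (k, T p j)" "k \<in> {1..num_blocks}" "p < card (block_at k)"
      "j \<in> {1..ns (enum (block_at k) p)}"
    | (free) s where "y = (0, S s)" "s \<in> {1..m_total}"
    using assms W_cases by blast
  then have "old_var y \<in> V \<and> new_var (old_var y) = y \<and> \<not> eliminated (old_var y)"
  proof cases
    case block
    define B where "B = block_at k"
    have B: "B \<in> blocks" using block_at_blocks[OF block(2)] by (simp add: B_def)
    have "enum B p \<in> B" using enum_mem[OF finite_blocks_mem[OF B] block(3)[folded B_def]] .
    then show ?thesis
      using block block_index_enum enum_pos_block_enum blocks_supported[OF B] blocks_disjoint_elim[OF B]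
        blocks_less_dim_col[OF B]
      by (auto simp: old_var_def new_var_def V_T B_def)
  next
    case free
    show ?thesis
    proof (cases "s \<le> m")
      case True
      then show ?thesis using free by (simp add: old_var_def new_var_def V_S)
    next
      case False
      then have s: "s \<in> {m<..m_total}" using free by auto
      then have x: "inv_into free_vars free_S s \<in> free_vars"
        using bij_betw_free_S by (metis bij_betw_def inv_into_into)
      then obtain i j where "inv_into free_vars free_S s = T i j" "\<not> supported i" "i \<notin> elim"
        unfolding free_vars_def by blast
      then show ?thesis
        using free False x free_vars_V bij_betw_inv_into_right[OF bij_betw_free_S s]
        by (simp add: old_var_def new_var_def)
    qed
  qed
  then show "old_var y \<in> V" "new_var (old_var y) = y" "\<not> eliminated (old_var y)"
    by auto
qed

definition new_mono :: "nat \<Rightarrow> (nat \<times> var \<Rightarrow>\<^sub>0 nat)" where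
  "new_mono i = (\<Sum>j\<in>{1..ns i}. Poly_Mapping.single (new_var (T i j)) (l i j))"

text \<open>The relation g_w written in the new variables, with the eliminated indices left out.\<close>

definition reduced_relation :: "(nat \<Rightarrow> complex) \<Rightarrow> (nat \<times> var) cpoly" where
  "reduced_relation w = (\<Sum>j\<in>{..<nc} - elim. Poly_Mapping.single (new_mono j) (w j))"

definition \<sigma> :: "var \<Rightarrow> (nat \<times> var) cpoly" where
  "\<sigma> x = (case x of
      T i j \<Rightarrow> if i \<in> elim then reduced_relation (\<lambda>j. - elim_vec i j) else Var (new_var x)
    | S k \<Rightarrow> Var (new_var x))"

definition \<tau> :: "nat \<times> var \<Rightarrow> var cpoly" where
  "\<tau> y = Var (old_var y)"

abbreviation GV :: "var cpoly set" where
  "GV \<equiv> relations id A ns l"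

abbreviation GW :: "(nat \<times> var) cpoly set" where
  "GW \<equiv> \<Union>k\<in>{1..num_blocks}. relations (Pair k) (factor_A k) (factor_ns k) (factor_l k)"

lemma mono_T_id: "mono_T id ns l i = (\<Sum>j\<in>{1..ns i}. Poly_Mapping.single (T i j) (l i j))"
  by (simp add: mono_T_def)

lemma mono_T_elim: "i \<in> elim \<Longrightarrow> mono_T id ns l i = Poly_Mapping.single (T i 1) 1"
  using elim_subset_lin_idx by (auto simp: mono_T_id lin_idx_def)

lemma keys_mono_T_id: "i < nc \<Longrightarrow> Poly_Mapping.keys (mono_T id ns l i) \<subseteq> V"
  using keys_sum_single_subset[of "\<lambda>j. T i j" "\<lambda>j. l i j" "{1..ns i}"] V_T
  unfolding mono_T_id by blast

lemma g_poly_id_split: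
  "g_poly id A ns l v = (\<Sum>j\<in>{..<nc} - elim. Poly_Mapping.single (mono_T id ns l j) (v $ j)) +
     (\<Sum>i\<in>elim. Poly_Mapping.single (mono_T id ns l i) (v $ i))"
proof -
  have split: "{..<nc} = ({..<nc} - elim) \<union> elim" using elim_less_dim_col by auto
  show ?thesis
    unfolding g_poly_def atMost_data_r
    by (subst split, rule sum.union_disjoint) (auto simp: finite_elim)
qed

lemma keys_new_mono: "j < nc \<Longrightarrow> j \<notin> elim \<Longrightarrow> Poly_Mapping.keys (new_mono j) \<subseteq> W"
  using keys_sum_single_subset[of "\<lambda>j'. new_var (T j j')" "\<lambda>j'. l j j'" "{1..ns j}"]
    new_var_W[of "T j _"]
  unfolding new_mono_def by (fastforce simp: V_T)

lemma reduced_relation_carrier: "reduced_relation w \<in> poly_carrier W"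
  unfolding reduced_relation_def by (intro poly_carrier_sum poly_carrier_single keys_new_mono) auto

lemma \<sigma>_carrier: "x \<in> V \<Longrightarrow> \<sigma> x \<in> poly_carrier W"
  using new_var_W[of x] reduced_relation_carrier
  by (cases x) (auto simp: \<sigma>_def poly_carrier_Var)

lemma \<tau>_carrier: "y \<in> W \<Longrightarrow> \<tau> y \<in> poly_carrier V"
  unfolding \<tau>_def by (rule poly_carrier_Var[OF old_var_V])

lemma GV_carrier: "GV \<subseteq> poly_carrier V"
  unfolding relations_def g_poly_def atMost_data_r
  by (auto intro!: poly_carrier_sum poly_carrier_single keys_mono_T_id)

lemma subst_\<sigma>_\<tau>: "y \<in> W \<Longrightarrow> subst \<sigma> (\<tau> y) = Var y"
  using not_eliminated_old_var[of y] new_var_old_var[of y]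
  by (cases "old_var y") (auto simp: \<tau>_def \<sigma>_def)

lemma subst_\<tau>_new_mono:
  assumes "j < nc" "j \<notin> elim"
  shows "subst \<tau> (Poly_Mapping.single (new_mono j) c) = Poly_Mapping.single (mono_T id ns l j) c"
proof -
  have "subst \<tau> (Poly_Mapping.single (new_mono j) c) =
      Poly_Mapping.single (\<Sum>j'\<in>{1..ns j}. Poly_Mapping.single (old_var (new_var (T j j'))) (l j j')) c"
    unfolding \<tau>_def[abs_def] new_mono_def by (rule subst_rename_single)
  also have "(\<Sum>j'\<in>{1..ns j}. Poly_Mapping.single (old_var (new_var (T j j'))) (l j j')) = mono_T id ns l j"
    unfolding mono_T_id using assms old_var_new_var[of "T j _"] by (intro sum.cong) (auto simp: V_T)
  finally show ?thesis .
qed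

lemma subst_\<tau>_reduced_relation:
  "subst \<tau> (reduced_relation w) = (\<Sum>j\<in>{..<nc} - elim. Poly_Mapping.single (mono_T id ns l j) (w j))"
  unfolding reduced_relation_def subst_sum by (intro sum.cong) (auto simp: subst_\<tau>_new_mono)

lemma g_poly_id_mem_genideal: "v \<in> mat_kernel A \<Longrightarrow> g_poly id A ns l v \<in> genideal (poly_ring V) GV"
  by (rule genideal_poly_ring_self[OF GV_carrier]) (auto simp: relations_def)

text \<open>For i \<in> elim, the relation g_v with v = elim_vec i is T_i - \<tau>(\<sigma>(T_i)).\<close>

lemma subst_\<tau>_\<sigma>:
  assumes x: "x \<in> V"
  shows "subst \<tau> (\<sigma> x) - Var x \<in> genideal (poly_ring V) GV"
proof (cases "eliminated x")
  case True
  then obtain i j where ij: "x = T i j" "i \<in> elim" by (cases x) auto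
  then have x_eq: "Var x = Poly_Mapping.single (mono_T id ns l i) 1"
    using x elim_subset_lin_idx mono_T_elim by (auto simp: V_T lin_idx_def Var_def)
  have "(\<Sum>i'\<in>elim. Poly_Mapping.single (mono_T id ns l i') (vec nc (elim_vec i) $ i')) =
      Poly_Mapping.single (mono_T id ns l i) 1"
    using ij(2) finite_elim elim_vec_diag[OF ij(2)] elim_vec_off_diag[OF ij(2)] elim_less_dim_col
    by (subst sum.remove[of _ i]) (auto intro!: sum.neutral)
  then have "subst \<tau> (\<sigma> x) - Var x = - g_poly id A ns l (vec nc (elim_vec i))"
    using ij x_eq unfolding g_poly_id_split
    by (simp add: \<sigma>_def subst_\<tau>_reduced_relation single_uminus sum_negf)
  then show ?thesis
    using g_poly_id_mem_genideal[OF vec_mem_mat_kernel[OF elim_vec_ker_fun[OF ij(2)]]]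
      ideal_poly_ring_uminus[OF genideal_poly_ring_ideal[OF GV_carrier]] by simp
next
  case False
  then have "subst \<tau> (\<sigma> x) = Var x"
    using old_var_new_var[OF x] by (cases x) (auto simp: \<sigma>_def \<tau>_def)
  then show ?thesis
    using ideal_poly_ring_zero[OF genideal_poly_ring_ideal[OF GV_carrier]] by simp
qed

lemma mono_T_Pair:
  "mono_T (Pair k) (factor_ns k) (factor_l k) p =
    (\<Sum>j\<in>{1..ns (enum (block_at k) p)}. Poly_Mapping.single (k, T p j) (l (enum (block_at k) p) j))"
  by (simp add: mono_T_def factor_ns_def factor_l_def block_ns_def block_l_def)

lemma g_poly_Pair:
  assumes k: "k \<in> {1..num_blocks}"
  shows "g_poly (Pair k) (factor_A k) (factor_ns k) (factor_l k) w =
    (\<Sum>p<card (block_at k). Poly_Mapping.single (mono_T (Pair k) (factor_ns k) (factor_l k) p) (w $ p))"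
proof -
  have "{..data_r (factor_A k)} = {..<card (block_at k)}"
    using card_blocks_ge2[OF block_at_blocks[OF k]] by (auto simp: factor_A_def data_r_block_mat)
  then show ?thesis by (simp add: g_poly_def)
qed

lemma new_mono_enum:
  assumes k: "k \<in> {1..num_blocks}" and p: "p < card (block_at k)"
  shows "new_mono (enum (block_at k) p) = mono_T (Pair k) (factor_ns k) (factor_l k) p"
proof -
  have B: "block_at k \<in> blocks" by (rule block_at_blocks[OF k])
  then have "supported (enum (block_at k) p)"
    using blocks_supported enum_mem[OF finite_blocks_mem p] by blast
  then have "new_var (T (enum (block_at k) p) j) = (k, T p j)" for j
    using block_index_enum[OF k p] enum_pos_block_enum[OF k p] by (simp add: new_var_def)
  then show ?thesis unfolding new_mono_def mono_T_Pair by simp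
qed

lemma GW_carrier: "GW \<subseteq> poly_carrier W"
proof
  fix g assume "g \<in> GW"
  then obtain k w where k: "k \<in> {1..num_blocks}" and g: "g = g_poly (Pair k) (factor_A k) (factor_ns k) (factor_l k) w"
    unfolding relations_def by auto
  have "Poly_Mapping.keys (mono_T (Pair k) (factor_ns k) (factor_l k) p) \<subseteq> W" if "p < card (block_at k)" for p
    using keys_sum_single_subset[of "\<lambda>j. (k, T p j)" "\<lambda>j. l (enum (block_at k) p) j"
        "{1..ns (enum (block_at k) p)}"] W_T k that
    unfolding mono_T_Pair by auto
  then show "g \<in> poly_carrier W"
    unfolding g g_poly_Pair[OF k] by (auto intro!: poly_carrier_sum poly_carrier_single)
qed

lemma g_poly_Pair_mem_genideal:
  "k \<in> {1..num_blocks} \<Longrightarrow> w \<in> mat_kernel (factor_A k) \<Longrightarrow>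
    g_poly (Pair k) (factor_A k) (factor_ns k) (factor_l k) w \<in> genideal (poly_ring W) GW"
  by (rule genideal_poly_ring_self[OF GW_carrier]) (auto simp: relations_def)

lemma block_sum_eq_g_poly_Pair:
  assumes k: "k \<in> {1..num_blocks}"
  shows "(\<Sum>j\<in>block_at k. Poly_Mapping.single (new_mono j) (f j)) =
    g_poly (Pair k) (factor_A k) (factor_ns k) (factor_l k) (vec (card (block_at k)) (\<lambda>p. f (enum (block_at k) p)))"
proof -
  have fin: "finite (block_at k)" by (rule finite_blocks_mem[OF block_at_blocks[OF k]])
  have "(\<Sum>j\<in>block_at k. Poly_Mapping.single (new_mono j) (f j)) =
      (\<Sum>p<card (block_at k). Poly_Mapping.single (new_mono (enum (block_at k) p)) (f (enum (block_at k) p)))"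
    by (rule sum.reindex_bij_betw[OF bij_betw_enum[OF fin], symmetric])
  then show ?thesis
    unfolding g_poly_Pair[OF k] by (simp add: new_mono_enum[OF k])
qed

lemma subst_\<tau>_GW:
  assumes "g \<in> GW"
  shows "subst \<tau> g \<in> genideal (poly_ring V) GV"
proof -
  obtain k w where k: "k \<in> {1..num_blocks}" and w: "w \<in> mat_kernel (factor_A k)"
    and g: "g = g_poly (Pair k) (factor_A k) (factor_ns k) (factor_l k) w"
    using assms unfolding relations_def by auto
  define B where "B = block_at k"
  have B: "B \<in> blocks" unfolding B_def by (rule block_at_blocks[OF k])
  have fin: "finite B" by (rule finite_blocks_mem[OF B])
  have w': "w \<in> carrier_vec (card B)" "extend_block B w \<in> ker_red"
    using w mat_kernel_block_mat[OF B] by (auto simp: factor_A_def B_def)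
  have "subst \<tau> g = (\<Sum>p<card B. Poly_Mapping.single (mono_T id ns l (enum B p)) (w $ p))"
    unfolding g g_poly_Pair[OF k] subst_sum \<tau>_def[abs_def] mono_T_Pair subst_rename_single
    by (simp add: old_var_def mono_T_id B_def)
  also have "\<dots> = (\<Sum>p<card B. (\<lambda>i. Poly_Mapping.single (mono_T id ns l i) (extend_block B w i)) (enum B p))"
    by (intro sum.cong) (auto simp: extend_block_def enum_mem[OF fin] enum_pos_enum[OF fin])
  also have "\<dots> = (\<Sum>i\<in>B. Poly_Mapping.single (mono_T id ns l i) (extend_block B w i))"
    by (rule sum.reindex_bij_betw[OF bij_betw_enum[OF fin]])
  also have "\<dots> = g_poly id A ns l (vec nc (extend_block B w))"
    unfolding g_poly_def atMost_data_r using blocks_subset[OF B]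
    by (intro sum.mono_neutral_cong_left) (auto simp: extend_block_def)
  finally show ?thesis
    using g_poly_id_mem_genideal[OF vec_mem_mat_kernel[OF ker_red_ker_fun[OF w'(2)]]] by simp
qed

lemma subst_\<sigma>_single_mono_T:
  assumes i: "i < nc"
  shows "subst \<sigma> (Poly_Mapping.single (mono_T id ns l i) c) =
    (if i \<in> elim then reduced_relation (\<lambda>j. - (c * elim_vec i j))
     else Poly_Mapping.single (new_mono i) c)"
proof (cases "i \<in> elim")
  case True
  then show ?thesis
    by (simp add: mono_T_elim subst_single \<sigma>_def reduced_relation_def sum_distrib_left
        const_poly_mult_single)
next
  case False
  have "subst \<sigma> (Poly_Mapping.single (mono_T id ns l i) c) =
      subst (\<lambda>x. Var (new_var x)) (Poly_Mapping.single (mono_T id ns l i) c)"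
  proof (rule subst_cong)
    fix \<mu> x assume "\<mu> \<in> Poly_Mapping.keys (Poly_Mapping.single (mono_T id ns l i) c)"
      "x \<in> Poly_Mapping.keys \<mu>"
    then have "x \<in> Poly_Mapping.keys (mono_T id ns l i)" by (cases "c = 0") auto
    then obtain j where "x = T i j"
      using keys_sum_single_subset[of "\<lambda>j. T i j" "\<lambda>j. l i j" "{1..ns i}"] unfolding mono_T_id by auto
    then show "\<sigma> x = Var (new_var x)" using False by (simp add: \<sigma>_def)
  qed
  also have "\<dots> = Poly_Mapping.single (new_mono i) c"
    unfolding mono_T_id new_mono_def by (rule subst_rename_single)
  finally show ?thesis using False by simp
qed

lemma subst_\<sigma>_g_poly:
  "subst \<sigma> (g_poly id A ns l v) = reduced_relation (\<lambda>j. v $ j - (\<Sum>i\<in>elim. v $ i * elim_vec i j))"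
proof -
  have "subst \<sigma> (\<Sum>i\<in>elim. Poly_Mapping.single (mono_T id ns l i) (v $ i)) =
      (\<Sum>i\<in>elim. \<Sum>j\<in>{..<nc} - elim. Poly_Mapping.single (new_mono j) (- (v $ i * elim_vec i j)))"
    unfolding subst_sum reduced_relation_def
    by (intro sum.cong) (simp_all add: subst_\<sigma>_single_mono_T elim_less_dim_col reduced_relation_def)
  also have "\<dots> = reduced_relation (\<lambda>j. - (\<Sum>i\<in>elim. v $ i * elim_vec i j))"
    unfolding reduced_relation_def
    by (subst sum.swap) (simp add: single_sum[symmetric] sum_negf)
  finally show ?thesis
    unfolding g_poly_id_split subst_add subst_sum
    by (simp add: subst_\<sigma>_single_mono_T reduced_relation_def single_add[symmetric] flip: sum.distrib)
qed

text \<open>On the reduced kernel the relation decomposes along the blocks into relations of the factors.\<close>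

lemma reduced_relation_mem_genideal:
  assumes w: "w \<in> ker_red"
  shows "reduced_relation w \<in> genideal (poly_ring W) GW"
proof -
  have "reduced_relation w =
      (\<Sum>j\<in>{..<nc} - elim. \<Sum>B\<in>blocks. Poly_Mapping.single (new_mono j) (zero_outside w B j))"
    unfolding reduced_relation_def
    by (intro sum.cong refl) (simp add: ker_red_sum_blocks[OF w] single_sum)
  also have "\<dots> = (\<Sum>B\<in>blocks. \<Sum>j\<in>{..<nc} - elim. Poly_Mapping.single (new_mono j) (zero_outside w B j))"
    by (rule sum.swap)
  also have "\<dots> = (\<Sum>B\<in>blocks. \<Sum>j\<in>B. Poly_Mapping.single (new_mono j) (w j))"
  proof (rule sum.cong[OF refl])
    fix B assume B: "B \<in> blocks"
    show "(\<Sum>j\<in>{..<nc} - elim. Poly_Mapping.single (new_mono j) (zero_outside w B j)) =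
        (\<Sum>j\<in>B. Poly_Mapping.single (new_mono j) (w j))"
      using blocks_subset[OF B] blocks_disjoint_elim[OF B]
      by (intro sum.mono_neutral_cong_right) (auto simp: zero_outside_def)
  qed
  also have "\<dots> = (\<Sum>k\<in>{1..num_blocks}. \<Sum>j\<in>block_at k. Poly_Mapping.single (new_mono j) (w j))"
    by (rule sum.reindex_bij_betw[OF bij_betw_block_at, symmetric])
  also have "\<dots> \<in> genideal (poly_ring W) GW"
  proof (rule ideal_poly_ring_sum[OF genideal_poly_ring_ideal[OF GW_carrier]])
    fix k assume k: "k \<in> {1..num_blocks}"
    define B where "B = block_at k"
    have B: "B \<in> blocks" unfolding B_def by (rule block_at_blocks[OF k])
    have "zero_outside w B \<in> ker_red"
      using splitting_blocks[OF B] w unfolding splitting_def by blast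
    then have "vec (card B) (\<lambda>p. w (enum B p)) \<in> mat_kernel (factor_A k)"
      using mat_kernel_block_mat[OF B] extend_vec_enum_all[OF B] by (simp add: factor_A_def B_def)
    then show "(\<Sum>j\<in>block_at k. Poly_Mapping.single (new_mono j) (w j)) \<in> genideal (poly_ring W) GW"
      using g_poly_Pair_mem_genideal[OF k] block_sum_eq_g_poly_Pair[OF k] by (simp add: B_def)
  qed
  finally show ?thesis .
qed

lemma subst_\<sigma>_GV:
  assumes "g \<in> GV"
  shows "subst \<sigma> g \<in> genideal (poly_ring W) GW"
proof -
  obtain v where v: "v \<in> mat_kernel A" and g: "g = g_poly id A ns l v"
    using assms unfolding relations_def by auto
  have "(\<lambda>j. v $ j) \<in> ker_fun" using v mat_kernel_iff_ker_fun by simp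
  then show ?thesis
    unfolding g subst_\<sigma>_g_poly by (intro reduced_relation_mem_genideal ker_fun_minus_elim_ker_red)
qed

lemma inverse_substitutions: "inverse_substitutions V W GV GW \<sigma> \<tau>"
  using \<sigma>_carrier \<tau>_carrier GV_carrier GW_carrier subst_\<sigma>_\<tau> subst_\<tau>_\<sigma> subst_\<sigma>_GV subst_\<tau>_GW
  by (rule inverse_substitutions.intro)

end

theorem proposition3p2:
  fixes A :: "complex mat" and ns :: "nat \<Rightarrow> nat" and l :: "nat \<Rightarrow> nat \<Rightarrow> nat" and m :: nat
  assumes "valid_data A ns l m"
  shows "\<exists>(t::nat) (As :: nat \<Rightarrow> complex mat) (nss :: nat \<Rightarrow> nat \<Rightarrow> nat)
            (ls :: nat \<Rightarrow> nat \<Rightarrow> nat \<Rightarrow> nat) (ms :: nat \<Rightarrow> nat) (m' :: nat).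
           (\<forall>i\<in>{1..t}. valid_data (As i) (nss i) (ls i) (ms i)
                        \<and> indecomposable_data (As i) (nss i) (ls i) \<and> ms i = 0)
         \<and> m' \<ge> m
         \<and> calg_iso_quot (R_ring A ns l m) (tensor_ring t As nss ls ms m')"
proof -
  interpret R_data A ns l m by (rule R_data.intro[OF assms])
  show ?thesis
  proof (intro exI conjI ballI)
    fix k assume "k \<in> {1..num_blocks}"
    then show "valid_data (factor_A k) (factor_ns k) (factor_l k) ((\<lambda>_. 0) k)"
      and "indecomposable_data (factor_A k) (factor_ns k) (factor_l k)"
      and "(\<lambda>_. 0::nat) k = 0"
      using valid_data_block_mat indecomposable_data_block_mat block_at_blocks
      by (simp_all add: factor_A_def factor_ns_def factor_l_def)
  next
    show "m_total \<ge> m" by (rule m_le_m_total)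
    show "calg_iso_quot (R_ring A ns l m) (tensor_ring num_blocks factor_A factor_ns factor_l (\<lambda>_. 0) m_total)"
      unfolding R_ring_def tensor_ring_def V_def[symmetric] W_def[symmetric]
      by (rule inverse_substitutions.calg_iso_quot[OF inverse_substitutions])
  qed
qed

end
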